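(* Let $\Omega$ be a Polish space, $\mathcal{P}$ a weakly relatively compact set of Borel probability measures on $\Omega$ (possibly non-dominated), $1\le p<\infty$, and $c_p=c_{p,\mathcal{P}}$. Then the set $\mathcal{C}$ of $\mu\in\mathcal{M}^+(c_p)$ such that $$\forall X\in L^1(c_p),\ X\ge0:\qquad \mu(X)=0\iff X=0\text{ in }L^1(c_p)$$ is non-empty and is an equivalence class of the relation $\mathcal{R}_{c_p}$ (the canonical $c_p$-class). Moreover, for every set $\{Q_n,\ n\in\mathbb{N}\}$ of Borel probability measures such that $c_p(X)=\sup_{n}E_{Q_n}(|X|^p)^{1/p}$ for all $X\in L^1(c_p)$, and every $\alpha_n>0$ with $\sum_n\alpha_n=1$, the probability measure $\sum_n\alpha_nQ_n$ belongs to this canonical $c_p$-class.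
   Context: $c_{p,\mathcal{P}}(f)=\sup_{P\in\mathcal{P}}E_P(|f|^p)^{1/p}$ for $f\in\mathcal{C}_b(\Omega)$ (a capacity), extended to all real functions by $c(f)=\sup\{c(\varphi):\varphi\in\mathcal{C}_b(\Omega),0\le\varphi\le f\}$ for $f\ge0$ lower semicontinuous and $c(g)=\inf\{c(f):f\text{ l.s.c.},f\ge|g|\}$ in general. $L^1(c_p)$ is the Banach space obtained as the quotient by $c_p$-null elements of the closure of $\mathcal{C}_b(\Omega)$ for $c_p$ in $\{g:c_p(g)<\infty\}$. Order: $X\ge0$ in $L^1(c_p)$ iff there are $f_n\in\mathcal{C}_b(\Omega)$, $f_n\ge0$, with $c_p(g-f_n)\to0$ for every representative $g$ of $X$. $\mathcal{M}^+(c_p)$ is the set of finite non-negative Borel measures $\mu$ on $\Omega$ defining an element of $L^1(c_p)^*$ (i.e. $f\mapsto\int f\,d\mu$ extends to a continuous linear form on $L^1(c_p)$, with value $\mu(X)$ at $X$). For $\mu,\nu\in\mathcal{M}^+(c_p)$, $\mu\,\mathcal{R}_{c_p}\,\nu$ iff $\{X\in L^1(c_p):X\ge0,\ \mu(X)=0\}=\{X\in L^1(c_p):X\ge0,\ \nu(X)=0\}$; this is an equivalence relation. *)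

theory Defs
  imports "HOL-Probability.Probability"
begin

definition borel_prob :: "'a::topological_space measure \<Rightarrow> bool" where
  "borel_prob P \<longleftrightarrow> sets P = sets borel \<and> prob_space P"

definition borel_finite :: "'a::topological_space measure \<Rightarrow> bool" where
  "borel_finite \<mu> \<longleftrightarrow> sets \<mu> = sets borel \<and> finite_measure \<mu>"

definition Cb :: "('a::topological_space \<Rightarrow> real) set" where
  "Cb = {f. continuous_on UNIV f \<and> bounded (range f)}"

definition weak_conv_meas :: "(nat \<Rightarrow> 'a::topological_space measure) \<Rightarrow> 'a measure \<Rightarrow> bool" where
  "weak_conv_meas Ps P \<longleftrightarrow>
     (\<forall>f\<in>Cb. (\<lambda>n. integral\<^sup>L (Ps n) f) \<longlonglongrightarrow> integral\<^sup>L P f)"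

text \<open>Weak relative compactness (for Polish spaces the weak topology on probability measures
  is metrizable, so relative compactness is relative sequential compactness).\<close>
definition weakly_rel_compact :: "'a::topological_space measure set \<Rightarrow> bool" where
  "weakly_rel_compact \<P> \<longleftrightarrow>
     (\<forall>Ps::nat \<Rightarrow> 'a measure. (\<forall>n. Ps n \<in> \<P>) \<longrightarrow>
        (\<exists>(r::nat \<Rightarrow> nat) (P::'a measure). strict_mono r \<and> borel_prob P \<and> weak_conv_meas (Ps \<circ> r) P))"

definition lsc :: "('a::topological_space \<Rightarrow> ennreal) \<Rightarrow> bool" where
  "lsc f \<longleftrightarrow> (\<forall>t. open {x. t < f x})"

definition cap_Cb :: "'a::topological_space measure set \<Rightarrow> real \<Rightarrow> ('a \<Rightarrow> real) \<Rightarrow> ennreal" where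
  "cap_Cb \<P> p f = (SUP P\<in>\<P>. ennreal ((\<integral>x. \<bar>f x\<bar> powr p \<partial>P) powr (1 / p)))"

definition cap_lsc :: "'a::topological_space measure set \<Rightarrow> real \<Rightarrow> ('a \<Rightarrow> ennreal) \<Rightarrow> ennreal" where
  "cap_lsc \<P> p f = (SUP \<phi>\<in>{\<phi>\<in>Cb. \<forall>x. 0 \<le> \<phi> x \<and> ennreal (\<phi> x) \<le> f x}. cap_Cb \<P> p \<phi>)"

definition cap :: "'a::topological_space measure set \<Rightarrow> real \<Rightarrow> ('a \<Rightarrow> real) \<Rightarrow> ennreal" where
  "cap \<P> p g = (INF f\<in>{f. lsc f \<and> (\<forall>x. ennreal \<bar>g x\<bar> \<le> f x)}. cap_lsc \<P> p f)"

section \<open>L^1(c_p), represented by representatives\<close>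

definition L1cap :: "'a::topological_space measure set \<Rightarrow> real \<Rightarrow> ('a \<Rightarrow> real) set" where
  "L1cap \<P> p = {g. cap \<P> p g < \<infinity> \<and> (\<forall>e>0. \<exists>\<phi>\<in>Cb. cap \<P> p (\<lambda>x. g x - \<phi> x) < ennreal e)}"

definition L1eq :: "'a::topological_space measure set \<Rightarrow> real \<Rightarrow> ('a \<Rightarrow> real) \<Rightarrow> ('a \<Rightarrow> real) \<Rightarrow> bool" where
  "L1eq \<P> p g h \<longleftrightarrow> cap \<P> p (\<lambda>x. g x - h x) = 0"

definition L1nonneg :: "'a::topological_space measure set \<Rightarrow> real \<Rightarrow> ('a \<Rightarrow> real) \<Rightarrow> bool" where
  "L1nonneg \<P> p g \<longleftrightarrow>
     (\<forall>h\<in>L1cap \<P> p. L1eq \<P> p g h \<longrightarrow>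
        (\<exists>fs. (\<forall>n. fs n \<in> Cb \<and> (\<forall>x. 0 \<le> fs n x)) \<and>
              (\<lambda>n. cap \<P> p (\<lambda>x. h x - fs n x)) \<longlonglongrightarrow> 0))"

text \<open>M^+(c_p): finite non-negative Borel measures whose integral is c_p-continuous on Cb
  (hence extends uniquely to a continuous linear form on L^1(c_p)).\<close>
definition Mplus :: "'a::topological_space measure set \<Rightarrow> real \<Rightarrow> 'a measure set" where
  "Mplus \<P> p = {\<mu>. borel_finite \<mu> \<and>
     (\<exists>C::real. \<forall>\<phi>\<in>Cb. ennreal \<bar>integral\<^sup>L \<mu> \<phi>\<bar> \<le> ennreal C * cap \<P> p \<phi>)}"

text \<open>The value mu(X) of the continuous extension at (a representative g of) X.\<close>
definition ext_val :: "'a::topological_space measure set \<Rightarrow> real \<Rightarrow> 'a measure \<Rightarrow> ('a \<Rightarrow> real) \<Rightarrow> real" where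
  "ext_val \<P> p \<mu> g = (THE v. \<forall>e>0. \<exists>d>0. \<forall>\<phi>\<in>Cb.
       cap \<P> p (\<lambda>x. g x - \<phi> x) < ennreal d \<longrightarrow> \<bar>integral\<^sup>L \<mu> \<phi> - v\<bar> < e)"

definition Rcap :: "'a::topological_space measure set \<Rightarrow> real \<Rightarrow> 'a measure \<Rightarrow> 'a measure \<Rightarrow> bool" where
  "Rcap \<P> p \<mu> \<nu> \<longleftrightarrow>
     {g\<in>L1cap \<P> p. L1nonneg \<P> p g \<and> ext_val \<P> p \<mu> g = 0} =
     {g\<in>L1cap \<P> p. L1nonneg \<P> p g \<and> ext_val \<P> p \<nu> g = 0}"

definition canon_class :: "'a::topological_space measure set \<Rightarrow> real \<Rightarrow> 'a measure set" where
  "canon_class \<P> p = {\<mu>\<in>Mplus \<P> p. \<forall>g\<in>L1cap \<P> p. L1nonneg \<P> p g \<longrightarrow>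
       (ext_val \<P> p \<mu> g = 0 \<longleftrightarrow> cap \<P> p g = 0)}"

definition epowr :: "ennreal \<Rightarrow> real \<Rightarrow> ennreal" where
  "epowr t r = (if t = \<infinity> then \<infinity> else ennreal (enn2real t powr r))"

definition mixture :: "(nat \<Rightarrow> real) \<Rightarrow> (nat \<Rightarrow> 'a::topological_space measure) \<Rightarrow> 'a measure" where
  "mixture \<alpha> Q = measure_of UNIV (sets borel) (\<lambda>A. \<Sum>n. ennreal (\<alpha> n) * emeasure (Q n) A)"

end

theory Submission
  imports Defs
begin

text \<open>
  On bounded continuous functions \<open>c\<^sub>p\<close> is a supremum of \<open>L\<^sup>p(P)\<close>-norms. On a Polish
  space a countable family of test functions determines Borel probabilities, so by separability
  and weak relative compactness countably many \<open>Q\<^sub>n \<in> \<P>\<close> already attain this supremum.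
  For any such norming sequence the mixture \<open>\<mu> = \<Sum> \<alpha>\<^sub>n Q\<^sub>n\<close> satisfies
  \<open>\<bar>\<mu>(\<phi>)\<bar> \<le> c\<^sub>p(\<phi>)\<close>, so it lies in \<open>M\<^sup>+(c\<^sub>p)\<close>. If \<open>X \<ge> 0\<close> and \<open>\<mu>(X) = 0\<close>, write \<open>X\<close> as a
  \<open>c\<^sub>p\<close>-limit of non-negative \<open>f\<^sub>k \<in> C\<^sub>b\<close>: then \<open>\<integral>f\<^sub>k dQ\<^sub>n \<rightarrow> 0\<close> for every \<open>n\<close>, and since the
  \<open>f\<^sub>k\<close> are \<open>c\<^sub>p\<close>-Cauchy, a truncation argument makes their \<open>L\<^sup>p(Q\<^sub>n)\<close>-norms small uniformly
  in \<open>n\<close>; hence \<open>c\<^sub>p(X) = 0\<close>.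
  Membership in the canonical class only depends on the zero set \<open>{X \<ge> 0. \<mu>(X) = 0}\<close>,
  which makes it an \<open>R\<^sub>c\<^sub>p\<close>-class.
\<close>

section \<open>Bounded continuous functions and \<open>L\<^sup>p\<close> norms\<close>

definition Lp_norm :: "'a measure \<Rightarrow> real \<Rightarrow> ('a \<Rightarrow> real) \<Rightarrow> real" where
  "Lp_norm P p f = (\<integral>x. \<bar>f x\<bar> powr p \<partial>P) powr (1/p)"

lemma Cb_continuous_on: "f \<in> Cb \<Longrightarrow> continuous_on UNIV f"
  by (simp add: Cb_def)

lemma Cb_bounded: "f \<in> Cb \<Longrightarrow> \<exists>B. \<forall>x. \<bar>f x\<bar> \<le> B"
  unfolding Cb_def bounded_iff by auto

lemma CbI: "continuous_on UNIV f \<Longrightarrow> (\<And>x. \<bar>f x\<bar> \<le> B) \<Longrightarrow> f \<in> Cb"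
  unfolding Cb_def bounded_iff by auto

lemma Cb_const [simp]: "(\<lambda>x. c) \<in> Cb"
  by (rule CbI[where B="\<bar>c\<bar>"]) (auto intro: continuous_intros)

lemma Cb_add: "f \<in> Cb \<Longrightarrow> g \<in> Cb \<Longrightarrow> (\<lambda>x. f x + g x) \<in> Cb"
proof -
  assume f: "f \<in> Cb" and g: "g \<in> Cb"
  obtain A B where "\<forall>x. \<bar>f x\<bar> \<le> A" "\<forall>x. \<bar>g x\<bar> \<le> B" using Cb_bounded f g by metis
  then show ?thesis
    by (intro CbI[where B="A + B"]) (use f g Cb_continuous_on in \<open>auto intro!: continuous_intros
        abs_triangle_ineq[THEN order_trans] add_mono\<close>)
qed

lemma Cb_diff: "f \<in> Cb \<Longrightarrow> g \<in> Cb \<Longrightarrow> (\<lambda>x. f x - g x) \<in> Cb"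
proof -
  assume f: "f \<in> Cb" and g: "g \<in> Cb"
  obtain B where "\<forall>x. \<bar>g x\<bar> \<le> B" using Cb_bounded g by metis
  then have "(\<lambda>x. - g x) \<in> Cb"
    by (intro CbI[where B=B]) (use g Cb_continuous_on in \<open>auto intro!: continuous_intros\<close>)
  from Cb_add[OF f this] show ?thesis by simp
qed

lemma Cb_abs_powr: "f \<in> Cb \<Longrightarrow> 0 < p \<Longrightarrow> (\<lambda>x. \<bar>f x\<bar> powr p) \<in> Cb"
proof -
  assume f: "f \<in> Cb" and p: "0 < p"
  obtain A where A: "\<forall>x. \<bar>f x\<bar> \<le> A" using Cb_bounded[OF f] by auto
  show ?thesis
  proof (rule CbI[where B="A powr p"])
    show "continuous_on UNIV (\<lambda>x. \<bar>f x\<bar> powr p)"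
      using p by (intro continuous_on_powr' continuous_intros Cb_continuous_on[OF f]) auto
    show "\<bar>\<bar>f x\<bar> powr p\<bar> \<le> A powr p" for x
      using A p by (auto intro!: powr_mono2)
  qed
qed

lemma Cb_abs: "f \<in> Cb \<Longrightarrow> (\<lambda>x. \<bar>f x\<bar>) \<in> Cb"
  using Cb_abs_powr[of f 1] by simp

lemma Cb_min: "f \<in> Cb \<Longrightarrow> g \<in> Cb \<Longrightarrow> (\<lambda>x. min (f x) (g x)) \<in> Cb"
proof -
  assume f: "f \<in> Cb" and g: "g \<in> Cb"
  obtain A B where A: "\<forall>x. \<bar>f x\<bar> \<le> A" and B: "\<forall>x. \<bar>g x\<bar> \<le> B" using Cb_bounded f g by metis
  show ?thesis
  proof (rule CbI[where B="A + B"])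
    show "continuous_on UNIV (\<lambda>x. min (f x) (g x))"
      using f g Cb_continuous_on by (auto intro!: continuous_intros)
    show "\<bar>min (f x) (g x)\<bar> \<le> A + B" for x
      using A[rule_format, of x] B[rule_format, of x] by (auto simp: abs_le_iff min_def)
  qed
qed

lemma Cb_max: "f \<in> Cb \<Longrightarrow> g \<in> Cb \<Longrightarrow> (\<lambda>x. max (f x) (g x)) \<in> Cb"
proof -
  assume "f \<in> Cb" "g \<in> Cb"
  then have "(\<lambda>x. 0 - min (0 - f x) (0 - g x)) \<in> Cb"
    by (intro Cb_diff Cb_min Cb_const)
  moreover have "(\<lambda>x. 0 - min (0 - f x) (0 - g x)) = (\<lambda>x. max (f x) (g x))"
    by (auto simp: fun_eq_iff)
  ultimately show ?thesis by simp
qed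

lemma Cb_measurable: "f \<in> Cb \<Longrightarrow> sets M = sets borel \<Longrightarrow> f \<in> borel_measurable M"
  using measurable_cong_sets[OF _ refl, of M borel] borel_measurable_continuous_onI Cb_continuous_on
  by blast

lemma Cb_integrable: "f \<in> Cb \<Longrightarrow> borel_finite M \<Longrightarrow> integrable M f"
proof -
  assume f: "f \<in> Cb" and M: "borel_finite M"
  obtain A where A: "\<forall>x. \<bar>f x\<bar> \<le> A" using Cb_bounded[OF f] by auto
  interpret finite_measure M using M by (simp add: borel_finite_def)
  show ?thesis
    using A M Cb_measurable[OF f] by (intro integrable_const_bound[where B=A])
      (auto simp: borel_finite_def)
qed

lemma borel_prob_imp_borel_finite: "borel_prob P \<Longrightarrow> borel_finite P"
  by (simp add: borel_prob_def borel_finite_def prob_space_def)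

lemma space_borel_prob: "borel_prob P \<Longrightarrow> space P = UNIV"
  using sets_eq_imp_space_eq[of P borel] by (simp add: borel_prob_def)

lemma nn_integral_Cb:
  assumes "borel_finite M" "f \<in> Cb" "\<And>x. 0 \<le> f x"
  shows "(\<integral>\<^sup>+x. ennreal (f x) \<partial>M) = ennreal (integral\<^sup>L M f)"
  using assms by (intro nn_integral_eq_integral Cb_integrable) auto

lemma Lp_norm_nonneg [simp]: "0 \<le> Lp_norm P p f"
  by (simp add: Lp_norm_def)

lemma integral_abs_powr_nonneg:
  fixes f :: "'a \<Rightarrow> real"
  shows "0 \<le> (\<integral>x. \<bar>f x\<bar> powr p \<partial>P)"
  by (rule integral_nonneg_AE) auto

lemma integrable_Cb_abs_powr:
  "f \<in> Cb \<Longrightarrow> borel_prob P \<Longrightarrow> 0 < p \<Longrightarrow> integrable P (\<lambda>x. \<bar>f x\<bar> powr p)"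
  using Cb_integrable[OF Cb_abs_powr borel_prob_imp_borel_finite] by blast

lemma Lp_norm_powr:
  "0 < p \<Longrightarrow> Lp_norm P p f powr p = (\<integral>x. \<bar>f x\<bar> powr p \<partial>P)"
  using integral_abs_powr_nonneg[where f=f and p=p and P=P] by (simp add: Lp_norm_def powr_powr)

lemma Lp_norm_mono:
  assumes "borel_prob P" "f \<in> Cb" "g \<in> Cb" "0 < p" "\<And>x. \<bar>f x\<bar> \<le> \<bar>g x\<bar>"
  shows "Lp_norm P p f \<le> Lp_norm P p g"
  unfolding Lp_norm_def
proof (rule powr_mono2)
  show "(\<integral>x. \<bar>f x\<bar> powr p \<partial>P) \<le> (\<integral>x. \<bar>g x\<bar> powr p \<partial>P)"
    using assms by (intro integral_mono integrable_Cb_abs_powr powr_mono2) auto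
qed (use assms in \<open>auto intro: integral_abs_powr_nonneg\<close>)

lemma Lp_norm_le_const:
  assumes "borel_prob P" "f \<in> Cb" "0 < p" "\<And>x. \<bar>f x\<bar> \<le> B"
  shows "Lp_norm P p f \<le> B"
proof -
  interpret prob_space P using assms(1) by (simp add: borel_prob_def)
  have B: "0 \<le> B" using assms(4)[of undefined] by linarith
  have "(\<integral>x. \<bar>f x\<bar> powr p \<partial>P) \<le> (\<integral>x. B powr p \<partial>P)"
    using assms by (intro integral_mono integrable_Cb_abs_powr powr_mono2) auto
  also have "\<dots> = B powr p" by (simp add: prob_space)
  finally have "Lp_norm P p f \<le> (B powr p) powr (1/p)"
    unfolding Lp_norm_def using assms by (intro powr_mono2) (auto intro: integral_abs_powr_nonneg)
  also have "\<dots> = B" using B assms by (simp add: powr_powr)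
  finally show ?thesis .
qed

lemma Lp_norm_eq_0_imp_AE:
  assumes "borel_prob P" "f \<in> Cb" "0 < p" "Lp_norm P p f = 0"
  shows "AE x in P. f x = 0"
proof -
  have "(\<integral>x. \<bar>f x\<bar> powr p \<partial>P) = 0"
    using assms(4) integral_abs_powr_nonneg[where f=f and p=p and P=P] by (simp add: Lp_norm_def)
  then have "AE x in P. \<bar>f x\<bar> powr p = 0"
    using assms by (subst integral_nonneg_eq_0_iff_AE[symmetric]) (auto intro: integrable_Cb_abs_powr)
  then show ?thesis by eventually_elim simp
qed

lemma Lp_norm_add_null:
  assumes P: "borel_prob P" and f: "f \<in> Cb" and g: "g \<in> Cb" and p: "0 < p"
    and null: "Lp_norm P p f = 0"
  shows "Lp_norm P p (\<lambda>x. f x + g x) = Lp_norm P p g"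
proof -
  have "AE x in P. \<bar>f x + g x\<bar> powr p = \<bar>g x\<bar> powr p"
    using Lp_norm_eq_0_imp_AE[OF P f p null] by eventually_elim simp
  then have "(\<integral>x. \<bar>f x + g x\<bar> powr p \<partial>P) = (\<integral>x. \<bar>g x\<bar> powr p \<partial>P)"
    using P p by (intro integral_cong_AE Cb_measurable Cb_abs_powr Cb_add f g)
      (auto simp: borel_prob_def)
  then show ?thesis unfolding Lp_norm_def by simp
qed

lemma powr_convex_combination_le:
  fixes x y t p :: real
  assumes "0 \<le> x" "0 \<le> y" "0 \<le> t" "t \<le> 1" "1 \<le> p"
  shows "(t * x + (1 - t) * y) powr p \<le> t * x powr p + (1 - t) * y powr p"
proof (cases "x = 0 \<or> y = 0")
  case True
  have sub_id: "c powr p \<le> c" if "0 \<le> c" "c \<le> 1" for c :: real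
  proof (cases "c = 0")
    case False
    then have "c powr p \<le> c powr 1" using that assms by (intro powr_mono') auto
    then show ?thesis using that by simp
  qed simp
  show ?thesis
  proof (cases "x = 0")
    case True
    have "((1 - t) * y) powr p = (1 - t) powr p * y powr p" using assms by (simp add: powr_mult)
    also have "\<dots> \<le> (1 - t) * y powr p" using sub_id[of "1 - t"] assms by (intro mult_right_mono) auto
    finally show ?thesis using True by simp
  next
    case False
    with \<open>x = 0 \<or> y = 0\<close> have y: "y = 0" by auto
    have "(t * x) powr p = t powr p * x powr p" using assms by (simp add: powr_mult)
    also have "\<dots> \<le> t * x powr p" using sub_id[of t] assms by (intro mult_right_mono) auto
    finally show ?thesis using y by simp
  qed
next
  case False
  then have "x \<in> {0<..}" "y \<in> {0<..}" using assms by auto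
  from convex_onD[OF powr_convex[OF assms(5)], of t y x] this assms
  show ?thesis by (auto simp: algebra_simps)
qed

text \<open>The pointwise inequality behind Minkowski's inequality: write
  \<open>\<bar>u\<bar> + \<bar>v\<bar> = (a + b) (t \<bar>u\<bar>/a + (1 - t) \<bar>v\<bar>/b)\<close> with \<open>t = a/(a + b)\<close> and use convexity.\<close>
lemma abs_add_powr_le:
  fixes u v a b p :: real
  assumes a: "0 < a" and b: "0 < b" and p: "1 \<le> p"
  shows "\<bar>u + v\<bar> powr p \<le> (a + b) powr p *
    (a / (a + b) * (\<bar>u\<bar> powr p / a powr p) + b / (a + b) * (\<bar>v\<bar> powr p / b powr p))"
proof -
  define t where "t = a / (a + b)"
  have t: "0 \<le> t" "t \<le> 1" "1 - t = b / (a + b)" using a b unfolding t_def by (auto simp: field_simps)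
  have "\<bar>u + v\<bar> powr p \<le> (\<bar>u\<bar> + \<bar>v\<bar>) powr p" using p by (intro powr_mono2) auto
  also have "\<bar>u\<bar> + \<bar>v\<bar> = (a + b) * (t * (\<bar>u\<bar> / a) + (1 - t) * (\<bar>v\<bar> / b))"
  proof -
    have "(a + b) * t = a" "(a + b) * (1 - t) = b" using a b unfolding t(3) by (simp_all add: t_def)
    then show ?thesis using a b by (metis (no_types) distrib_left mult.assoc nonzero_mult_div_cancel_left
        less_irrefl times_divide_eq_right)
  qed
  also have "((a + b) * (t * (\<bar>u\<bar> / a) + (1 - t) * (\<bar>v\<bar> / b))) powr p
      = (a + b) powr p * (t * (\<bar>u\<bar> / a) + (1 - t) * (\<bar>v\<bar> / b)) powr p"
    using a b t by (simp add: powr_mult)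
  also have "(t * (\<bar>u\<bar> / a) + (1 - t) * (\<bar>v\<bar> / b)) powr p
      \<le> t * (\<bar>u\<bar> / a) powr p + (1 - t) * (\<bar>v\<bar> / b) powr p"
    using a b t p by (intro powr_convex_combination_le) auto
  finally show ?thesis
    using a b unfolding t(3) by (simp add: t_def powr_divide mult_left_mono)
qed

lemma Lp_norm_triangle:
  assumes P: "borel_prob P" and f: "f \<in> Cb" and g: "g \<in> Cb" and p: "1 \<le> p"
  shows "Lp_norm P p (\<lambda>x. f x + g x) \<le> Lp_norm P p f + Lp_norm P p g"
proof -
  interpret prob_space P using P by (simp add: borel_prob_def)
  have p0: "0 < p" using p by simp
  define a b where "a = Lp_norm P p f" and "b = Lp_norm P p g"
  have "0 \<le> a" "0 \<le> b" by (simp_all add: a_def b_def)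
  then consider "a = 0" | "b = 0" | "0 < a" "0 < b" by fastforce
  then show ?thesis
  proof cases
    case 1
    then show ?thesis using Lp_norm_add_null[OF P f g p0] by (simp add: a_def)
  next
    case 2
    then show ?thesis using Lp_norm_add_null[OF P g f p0] by (simp add: b_def add.commute)
  next
    case 3
    have int: "integrable P (\<lambda>x. \<bar>h x\<bar> powr p)" if "h \<in> Cb" for h
      using integrable_Cb_abs_powr[OF that P p0] .
    have "(\<integral>x. \<bar>f x + g x\<bar> powr p \<partial>P) \<le> (\<integral>x. (a + b) powr p *
        (a / (a + b) * (\<bar>f x\<bar> powr p / a powr p) + b / (a + b) * (\<bar>g x\<bar> powr p / b powr p)) \<partial>P)"
      using 3 p int[OF f] int[OF g] int[OF Cb_add[OF f g]]
      by (intro integral_mono abs_add_powr_le) auto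
    also have "\<dots> = (a + b) powr p * (a / (a + b) * ((\<integral>x. \<bar>f x\<bar> powr p \<partial>P) / a powr p)
        + b / (a + b) * ((\<integral>x. \<bar>g x\<bar> powr p \<partial>P) / b powr p))"
      using int[OF f] int[OF g] by simp
    also have "\<dots> = (a + b) powr p"
      using 3 Lp_norm_powr[OF p0, of P, symmetric] by (simp add: a_def b_def add_divide_distrib[symmetric])
    finally show ?thesis
      using 3 p powr_mono2[of "1/p", OF _ integral_abs_powr_nonneg]
      by (fastforce simp: Lp_norm_def a_def b_def powr_powr)
  qed
qed

lemma integral_abs_le_Lp_norm:
  assumes P: "borel_prob P" and f: "f \<in> Cb" and p: "1 \<le> p"
  shows "(\<integral>x. \<bar>f x\<bar> \<partial>P) \<le> Lp_norm P p f"
proof -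
  interpret prob_space P using P by (simp add: borel_prob_def)
  have p0: "0 < p" using p by simp
  define a where "a = Lp_norm P p f"
  have "0 \<le> a" by (simp add: a_def)
  then consider "p = 1" | "a = 0" | "1 < p" "0 < a" using p by fastforce
  then show ?thesis
  proof cases
    case 1
    then show ?thesis by (simp add: Lp_norm_def)
  next
    case 2
    have "AE x in P. f x = 0" using Lp_norm_eq_0_imp_AE[OF P f p0] 2 a_def by simp
    then have "(\<integral>x. \<bar>f x\<bar> \<partial>P) = (\<integral>x. 0 \<partial>P)"
      using P by (intro integral_cong_AE Cb_measurable Cb_abs f) (auto simp: borel_prob_def)
    then show ?thesis using a_def by simp
  next
    case 3
    define q where "q = p / (p - 1)"
    have q: "1 < q" "1/p + 1/q = 1" using 3 unfolding q_def by (auto simp: field_simps)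
    have Young: "\<bar>f x\<bar> / a \<le> (\<bar>f x\<bar> powr p / a powr p) / p + 1 / q" for x
    proof -
      have "\<bar>f x\<bar> / a * 1 \<le> (\<bar>f x\<bar> / a) powr p / p + 1 powr q / q"
        using 3 q by (intro Youngs_inequality) auto
      then show ?thesis using 3 by (simp add: powr_divide)
    qed
    have "(\<integral>x. \<bar>f x\<bar> / a \<partial>P) \<le> (\<integral>x. (\<bar>f x\<bar> powr p / a powr p) / p + 1 / q \<partial>P)"
      using Young integrable_Cb_abs_powr[OF f P p0]
        Cb_integrable[OF Cb_abs[OF f] borel_prob_imp_borel_finite[OF P]]
      by (intro integral_mono) auto
    also have "\<dots> = ((\<integral>x. \<bar>f x\<bar> powr p \<partial>P) / a powr p) / p + 1 / q"
      using integrable_Cb_abs_powr[OF f P p0] by (simp add: prob_space)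
    also have "\<dots> = 1"
      using Lp_norm_powr[OF p0, of P f, symmetric] 3 q by (simp add: a_def)
    finally show ?thesis using 3 by (simp add: a_def field_simps)
  qed
qed

lemma Lp_norm_tendsto:
  assumes P: "borel_prob P" and p: "0 < p" and fs: "\<And>k. fs k \<in> Cb" and f: "f \<in> Cb"
    and lim: "\<And>x. (\<lambda>k. fs k x) \<longlonglongrightarrow> f x" and B: "\<And>k x. \<bar>fs k x\<bar> \<le> B"
  shows "(\<lambda>k. Lp_norm P p (fs k)) \<longlonglongrightarrow> Lp_norm P p f"
proof -
  interpret prob_space P using P by (simp add: borel_prob_def)
  have sP: "sets P = sets borel" using P by (simp add: borel_prob_def)
  have "(\<lambda>k. \<integral>x. \<bar>fs k x\<bar> powr p \<partial>P) \<longlonglongrightarrow> (\<integral>x. \<bar>f x\<bar> powr p \<partial>P)"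
  proof (rule integral_dominated_convergence[where w="\<lambda>x. B powr p"])
    show "(\<lambda>x. \<bar>f x\<bar> powr p) \<in> borel_measurable P"
      using Cb_measurable[OF Cb_abs_powr[OF f p] sP] .
    show "(\<lambda>x. \<bar>fs k x\<bar> powr p) \<in> borel_measurable P" for k
      using Cb_measurable[OF Cb_abs_powr[OF fs p] sP] .
    show "AE x in P. (\<lambda>k. \<bar>fs k x\<bar> powr p) \<longlonglongrightarrow> \<bar>f x\<bar> powr p"
      using lim p by (intro AE_I2 tendsto_powr' tendsto_intros) auto
    show "AE x in P. norm (\<bar>fs k x\<bar> powr p) \<le> B powr p" for k
      using B p by (intro AE_I2) (auto intro: powr_mono2)
  qed simp
  then show ?thesis unfolding Lp_norm_def using p
    by (intro tendsto_powr' tendsto_intros) (auto intro: integral_abs_powr_nonneg)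
qed

section \<open>Subadditivity of the capacity\<close>

lemma cap_Cb_eq_SUP_Lp_norm: "cap_Cb \<P> p f = (SUP P\<in>\<P>. ennreal (Lp_norm P p f))"
  by (simp add: cap_Cb_def Lp_norm_def)

lemma Lp_norm_le_cap_Cb: "P \<in> \<P> \<Longrightarrow> ennreal (Lp_norm P p f) \<le> cap_Cb \<P> p f"
  unfolding cap_Cb_eq_SUP_Lp_norm by (rule SUP_upper)

lemma cap_Cb_mono:
  assumes "\<forall>P\<in>\<P>. borel_prob P" "f \<in> Cb" "g \<in> Cb" "0 < p" "\<And>x. \<bar>f x\<bar> \<le> \<bar>g x\<bar>"
  shows "cap_Cb \<P> p f \<le> cap_Cb \<P> p g"
  unfolding cap_Cb_eq_SUP_Lp_norm
proof (rule SUP_mono)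
  fix P assume "P \<in> \<P>"
  then show "\<exists>P'\<in>\<P>. ennreal (Lp_norm P p f) \<le> ennreal (Lp_norm P' p g)"
    using assms by (intro bexI[of _ P] ennreal_leI Lp_norm_mono) auto
qed

lemma cap_Cb_finite:
  assumes "\<forall>P\<in>\<P>. borel_prob P" "f \<in> Cb" "0 < p"
  shows "cap_Cb \<P> p f < \<infinity>"
proof -
  obtain B where "\<forall>x. \<bar>f x\<bar> \<le> B" using Cb_bounded[OF assms(2)] by auto
  then have "cap_Cb \<P> p f \<le> ennreal B"
    unfolding cap_Cb_eq_SUP_Lp_norm using assms by (intro SUP_least ennreal_leI Lp_norm_le_const) auto
  then show ?thesis using le_less_trans by fastforce
qed

lemma cap_Cb_abs: "cap_Cb \<P> p (\<lambda>x. \<bar>f x\<bar>) = cap_Cb \<P> p f"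
  by (simp add: cap_Cb_def)

lemma lsc_continuous: "continuous_on UNIV h \<Longrightarrow> lsc (\<lambda>x. ennreal (h x))"
  unfolding lsc_def
proof
  fix t :: ennreal assume h: "continuous_on UNIV h"
  show "open {x. t < ennreal (h x)}"
  proof (cases t rule: ennreal_cases)
    case (real r)
    have "{x. t < ennreal (h x)} = {x. r < h x}"
      using real by (auto simp: ennreal_less_iff ennreal_lessI)
    also have "open \<dots>" using h by (intro open_Collect_less continuous_intros) auto
    finally show ?thesis .
  qed simp
qed

lemma lsc_SUP: "(\<And>k. lsc (h k)) \<Longrightarrow> lsc (\<lambda>x. SUP k. h k x)"
  unfolding lsc_def
proof
  fix t assume "\<And>k. \<forall>t. open {x. t < h k x}"
  then have "open (\<Union>k. {x. t < h k x})" by auto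
  moreover have "{x. t < (SUP k. h k x)} = (\<Union>k. {x. t < h k x})" by (auto simp: less_SUP_iff)
  ultimately show "open {x. t < (SUP k. h k x)}" by simp
qed

lemma cap_le_cap_lsc: "lsc f \<Longrightarrow> (\<And>x. ennreal \<bar>g x\<bar> \<le> f x) \<Longrightarrow> cap \<P> p g \<le> cap_lsc \<P> p f"
  unfolding cap_def by (rule INF_lower) auto

lemma cap_Cb_le_cap_lsc:
  "\<phi> \<in> Cb \<Longrightarrow> (\<And>x. 0 \<le> \<phi> x) \<Longrightarrow> (\<And>x. ennreal (\<phi> x) \<le> f x) \<Longrightarrow> cap_Cb \<P> p \<phi> \<le> cap_lsc \<P> p f"
  unfolding cap_lsc_def by (rule SUP_upper) auto

lemma cap_eq_cap_Cb:
  assumes "\<forall>P\<in>\<P>. borel_prob P" "\<phi> \<in> Cb" "0 < p"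
  shows "cap \<P> p \<phi> = cap_Cb \<P> p \<phi>"
proof (rule antisym)
  have "lsc (\<lambda>x. ennreal \<bar>\<phi> x\<bar>)"
    using Cb_continuous_on[OF assms(2)] by (intro lsc_continuous continuous_intros)
  then have "cap \<P> p \<phi> \<le> cap_lsc \<P> p (\<lambda>x. ennreal \<bar>\<phi> x\<bar>)" by (rule cap_le_cap_lsc) simp
  also have "\<dots> \<le> cap_Cb \<P> p \<phi>"
    unfolding cap_lsc_def using assms
    by (intro SUP_least) (auto simp: ennreal_le_iff intro: cap_Cb_mono)
  finally show "cap \<P> p \<phi> \<le> cap_Cb \<P> p \<phi>" .
next
  show "cap_Cb \<P> p \<phi> \<le> cap \<P> p \<phi>"
    unfolding cap_def
  proof (intro INF_greatest)
    fix f assume "f \<in> {f. lsc f \<and> (\<forall>x. ennreal \<bar>\<phi> x\<bar> \<le> f x)}"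
    then have "cap_Cb \<P> p (\<lambda>x. \<bar>\<phi> x\<bar>) \<le> cap_lsc \<P> p f"
      using assms by (intro cap_Cb_le_cap_lsc Cb_abs) auto
    then show "cap_Cb \<P> p \<phi> \<le> cap_lsc \<P> p f" by (simp add: cap_Cb_abs)
  qed
qed

lemma cap_mono: "(\<And>x. \<bar>g x\<bar> \<le> \<bar>h x\<bar>) \<Longrightarrow> cap \<P> p g \<le> cap \<P> p h"
  unfolding cap_def by (rule INF_superset_mono) (auto intro: order_trans[OF ennreal_leI])

lemma cap_diff_commute: "cap \<P> p (\<lambda>x. g x - h x) = cap \<P> p (\<lambda>x. h x - g x)"
  by (rule antisym; rule cap_mono) auto

lemma cap_zero [simp]: "cap \<P> p (\<lambda>x. 0) = 0"
proof -
  have "cap \<P> p (\<lambda>x. 0) \<le> cap_lsc \<P> p (\<lambda>x. 0)"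
    using lsc_continuous[of "\<lambda>x. 0"] by (intro cap_le_cap_lsc) auto
  also have "cap_lsc \<P> p (\<lambda>x. 0) = 0"
    unfolding cap_lsc_def
  proof (intro antisym SUP_least)
    fix \<psi> :: "'a \<Rightarrow> real" assume "\<psi> \<in> {\<psi> \<in> Cb. \<forall>x. 0 \<le> \<psi> x \<and> ennreal (\<psi> x) \<le> 0}"
    then have "\<psi> = (\<lambda>x. 0)" by (auto simp: fun_eq_iff ennreal_eq_0_iff intro: antisym)
    then show "cap_Cb \<P> p \<psi> \<le> 0" unfolding cap_Cb_def by (intro SUP_least) simp
  qed simp
  finally show ?thesis by simp
qed

definition inf_convolution :: "('a::metric_space \<Rightarrow> real) \<Rightarrow> real \<Rightarrow> 'a \<Rightarrow> real" where
  "inf_convolution h L x = Inf (range (\<lambda>y. h y + L * dist x y))"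

context
  fixes h :: "'a::metric_space \<Rightarrow> real" and L :: real
  assumes h_nonneg: "\<And>y. 0 \<le> h y" and L_nonneg: "0 \<le> L"
begin

lemma inf_convolution_le: "inf_convolution h L x \<le> h y + L * dist x y"
  unfolding inf_convolution_def
  by (rule cInf_lower) (auto intro!: bdd_belowI[where m=0] add_nonneg_nonneg mult_nonneg_nonneg
      h_nonneg L_nonneg)

lemma inf_convolution_greatest: "(\<And>y. c \<le> h y + L * dist x y) \<Longrightarrow> c \<le> inf_convolution h L x"
  unfolding inf_convolution_def by (rule cInf_greatest) auto

lemma inf_convolution_nonneg: "0 \<le> inf_convolution h L x"
  by (rule inf_convolution_greatest) (simp add: h_nonneg L_nonneg add_nonneg_nonneg)

lemma inf_convolution_le_self: "inf_convolution h L x \<le> h x"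
  using inf_convolution_le[of x x] by simp

lemma inf_convolution_ge:
  assumes "0 < e" "r \<le> L * e" "\<And>y. dist y x < e \<Longrightarrow> r \<le> h y"
  shows "r \<le> inf_convolution h L x"
proof (rule inf_convolution_greatest)
  fix y
  show "r \<le> h y + L * dist x y"
  proof (cases "dist y x < e")
    case True
    then show ?thesis using assms(3) L_nonneg by (simp add: add_increasing2)
  next
    case False
    then have "L * e \<le> L * dist x y" using L_nonneg by (simp add: dist_commute mult_left_mono)
    then show ?thesis using assms(2) h_nonneg[of y] by linarith
  qed
qed

lemma lipschitz_inf_convolution: "L-lipschitz_on UNIV (inf_convolution h L)"
proof (rule lipschitz_onI)
  have "inf_convolution h L x \<le> inf_convolution h L x' + L * dist x x'" for x x'
  proof -
    have "inf_convolution h L x - L * dist x x' \<le> inf_convolution h L x'"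
    proof (rule inf_convolution_greatest)
      fix y
      have "L * dist x y \<le> L * dist x x' + L * dist x' y"
        using L_nonneg dist_triangle[of x y x'] by (metis distrib_left mult_left_mono)
      then show "inf_convolution h L x - L * dist x x' \<le> h y + L * dist x' y"
        using inf_convolution_le[of x y] by simp
    qed
    then show ?thesis by simp
  qed
  then show "dist (inf_convolution h L x) (inf_convolution h L y) \<le> L * dist x y" for x y
    by (smt (verit) dist_commute dist_real_def)
qed (rule L_nonneg)

end

text \<open>The approximants are the inf-convolutions of the truncations \<open>min f k\<close> with Lipschitz
  constant \<open>k\<close>.\<close>
lemma lsc_SUP_Cb:
  fixes f :: "'a::metric_space \<Rightarrow> ennreal"
  assumes "lsc f"
  obtains \<psi> where "\<And>k. \<psi> k \<in> Cb" "\<And>k x. 0 \<le> \<psi> k x" "\<And>k x. ennreal (\<psi> k x) \<le> f x"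
    "\<And>x. incseq (\<lambda>k. \<psi> k x)" "\<And>x. (SUP k. ennreal (\<psi> k x)) = f x"
proof -
  define h where "h k y = enn2real (min (f y) (of_nat k))" for k :: nat and y
  have hk: "ennreal (h k y) = min (f y) (of_nat k)" for k y
    unfolding h_def by (subst ennreal_enn2real) (auto simp: min_less_iff_disj of_nat_less_top)
  have h0: "0 \<le> h k y" for k y unfolding h_def by simp
  have hle: "h k y \<le> real k" for k y
    using hk[of k y] by (metis ennreal_le_iff ennreal_of_nat_eq_real_of_nat min.cobounded2 of_nat_0_le_iff)
  have hmono: "h k y \<le> h k' y" if "k \<le> k'" for k k' y
    using hk[of k y] hk[of k' y] h0 that
    by (metis ennreal_le_iff min.mono of_nat_mono order_refl)
  define \<psi> where "\<psi> k = inf_convolution (h k) (real k)" for k :: nat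
  have \<psi>_le: "\<psi> k x \<le> h k y + real k * dist x y" for k x y
    unfolding \<psi>_def by (rule inf_convolution_le[OF h0]) simp
  have \<psi>_greatest: "c \<le> \<psi> k x" if "\<And>y. c \<le> h k y + real k * dist x y" for c k x
    unfolding \<psi>_def by (rule inf_convolution_greatest[OF h0]) (use that in simp_all)
  have \<psi>0: "0 \<le> \<psi> k x" for k x unfolding \<psi>_def by (rule inf_convolution_nonneg[OF h0]) simp
  have \<psi>h: "\<psi> k x \<le> h k x" for k x unfolding \<psi>_def by (rule inf_convolution_le_self[OF h0]) simp
  have Cb: "\<psi> k \<in> Cb" for k
  proof (rule CbI[where B="real k"])
    show "continuous_on UNIV (\<psi> k)" unfolding \<psi>_def
      by (rule lipschitz_on_continuous_on[OF lipschitz_inf_convolution[OF h0]]) simp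
    show "\<bar>\<psi> k x\<bar> \<le> real k" for x using \<psi>0 \<psi>h hle by (metis abs_of_nonneg order_trans)
  qed
  have le_f: "ennreal (\<psi> k x) \<le> f x" for k x
    using ennreal_leI[OF \<psi>h, of k x] hk[of k x] by (metis min.boundedE)
  have inc: "incseq (\<lambda>k. \<psi> k x)" for x
  proof (rule incseq_SucI, rule \<psi>_greatest)
    fix k y
    have "\<psi> k x \<le> h k y + real k * dist x y" by (rule \<psi>_le)
    also have "\<dots> \<le> h (Suc k) y + real (Suc k) * dist x y"
      by (intro add_mono hmono mult_right_mono) auto
    finally show "\<psi> k x \<le> h (Suc k) y + real (Suc k) * dist x y" .
  qed
  have "f x \<le> (SUP k. ennreal (\<psi> k x))" for x
  proof (rule dense_le)
    fix t assume t: "t < f x"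
    then obtain r where r: "t = ennreal r" "0 \<le> r" by (cases t rule: ennreal_cases) auto
    have "open {y. t < f y}" using assms by (simp add: lsc_def)
    then obtain e where e: "0 < e" "\<And>y. dist y x < e \<Longrightarrow> t < f y"
      using t unfolding open_dist by blast
    obtain k :: nat where k: "r + 1 + r / e \<le> real k" using real_arch_simple by blast
    have "0 \<le> r / e" using r e by simp
    then have rk: "r < real k" "r / e \<le> real k" using k r(2) by linarith+
    have "r \<le> h k y" if "dist y x < e" for y
    proof -
      have "t < ennreal (h k y)"
        using e(2)[OF that] rk r unfolding hk by (simp add: ennreal_of_nat_eq_real_of_nat ennreal_lessI)
      then show ?thesis using r by (simp add: ennreal_less_iff)
    qed
    moreover have "r \<le> real k * e" using rk(2) e by (simp add: field_simps)
    ultimately have "r \<le> \<psi> k x"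
      unfolding \<psi>_def using e(1) by (intro inf_convolution_ge[OF h0]) auto
    then have "t \<le> ennreal (\<psi> k x)" using r by (simp add: ennreal_leI)
    also have "\<dots> \<le> (SUP k. ennreal (\<psi> k x))" by (rule SUP_upper) simp
    finally show "t \<le> (SUP k. ennreal (\<psi> k x))" .
  qed
  then have "(SUP k. ennreal (\<psi> k x)) = f x" for x
    by (intro antisym SUP_least le_f)
  with that Cb \<psi>0 le_f inc show ?thesis by blast
qed

lemma lsc_add:
  fixes f g :: "'a::metric_space \<Rightarrow> ennreal"
  assumes "lsc f" "lsc g"
  shows "lsc (\<lambda>x. f x + g x)"
proof -
  obtain \<psi>1 where 1: "\<And>k. \<psi>1 k \<in> Cb" "\<And>k x. 0 \<le> \<psi>1 k x" "\<And>x. incseq (\<lambda>k. \<psi>1 k x)"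
    "\<And>x. (SUP k. ennreal (\<psi>1 k x)) = f x"
    using lsc_SUP_Cb[OF assms(1)] by metis
  obtain \<psi>2 where 2: "\<And>k. \<psi>2 k \<in> Cb" "\<And>k x. 0 \<le> \<psi>2 k x" "\<And>x. incseq (\<lambda>k. \<psi>2 k x)"
    "\<And>x. (SUP k. ennreal (\<psi>2 k x)) = g x"
    using lsc_SUP_Cb[OF assms(2)] by metis
  have "f x + g x = (SUP k. ennreal (\<psi>1 k x + \<psi>2 k x))" for x
  proof -
    have "(SUP k. ennreal (\<psi>1 k x + \<psi>2 k x)) = (SUP k. ennreal (\<psi>1 k x) + ennreal (\<psi>2 k x))"
      using 1(2) 2(2) by (simp add: ennreal_plus)
    also have "\<dots> = (SUP k. ennreal (\<psi>1 k x)) + (SUP k. ennreal (\<psi>2 k x))"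
      by (rule ennreal_SUP_add) (use 1(3) 2(3) in \<open>auto simp: incseq_def intro: ennreal_leI\<close>)
    finally show ?thesis using 1(4) 2(4) by simp
  qed
  then show ?thesis
    by (simp only:) (intro lsc_SUP lsc_continuous continuous_intros,
        use 1(1) 2(1) Cb_continuous_on in auto)
qed

lemma tendsto_min_incseq:
  fixes u :: "nat \<Rightarrow> real"
  assumes "incseq u" "\<And>k. 0 \<le> u k" "ennreal c \<le> (SUP k. ennreal (u k))"
  shows "(\<lambda>k. min c (u k)) \<longlonglongrightarrow> c"
proof (rule order_tendstoI)
  fix a assume a: "a < c"
  show "\<forall>\<^sub>F k in sequentially. a < min c (u k)"
  proof (cases "a < 0")
    case True
    then show ?thesis using a assms(2) by (intro always_eventually) (auto intro: less_le_trans)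
  next
    case False
    have "ennreal a < ennreal c" using a False by (simp add: ennreal_lessI)
    then have "ennreal a < (SUP k. ennreal (u k))" using assms(3) by (rule order.strict_trans2)
    then obtain K where "ennreal a < ennreal (u K)" by (auto simp: less_SUP_iff)
    then have "a < u K" using False by (simp add: ennreal_less_iff)
    then show ?thesis
      unfolding eventually_sequentially using a assms(1)
      by (auto intro: less_le_trans simp: incseq_def)
  qed
qed (auto intro: always_eventually le_less_trans)

lemma cap_lsc_add:
  fixes f1 f2 :: "'a::metric_space \<Rightarrow> ennreal"
  assumes \<P>: "\<forall>P\<in>\<P>. borel_prob P" and p: "1 \<le> p" and "lsc f1" "lsc f2"
  shows "cap_lsc \<P> p (\<lambda>x. f1 x + f2 x) \<le> cap_lsc \<P> p f1 + cap_lsc \<P> p f2"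
  unfolding cap_lsc_def[of _ _ "\<lambda>x. f1 x + f2 x"]
proof (intro SUP_least)
  have p0: "0 < p" using p by simp
  obtain \<psi>1 where 1: "\<And>k. \<psi>1 k \<in> Cb" "\<And>k x. 0 \<le> \<psi>1 k x" "\<And>k x. ennreal (\<psi>1 k x) \<le> f1 x"
      "\<And>x. incseq (\<lambda>k. \<psi>1 k x)" "\<And>x. (SUP k. ennreal (\<psi>1 k x)) = f1 x"
    using lsc_SUP_Cb[OF \<open>lsc f1\<close>] by metis
  obtain \<psi>2 where 2: "\<And>k. \<psi>2 k \<in> Cb" "\<And>k x. 0 \<le> \<psi>2 k x" "\<And>k x. ennreal (\<psi>2 k x) \<le> f2 x"
      "\<And>x. incseq (\<lambda>k. \<psi>2 k x)" "\<And>x. (SUP k. ennreal (\<psi>2 k x)) = f2 x"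
    using lsc_SUP_Cb[OF \<open>lsc f2\<close>] by metis
  fix \<psi> assume "\<psi> \<in> {\<phi> \<in> Cb. \<forall>x. 0 \<le> \<phi> x \<and> ennreal (\<phi> x) \<le> f1 x + f2 x}"
  then have \<psi>: "\<psi> \<in> Cb" "\<And>x. 0 \<le> \<psi> x" "\<And>x. ennreal (\<psi> x) \<le> f1 x + f2 x" by auto
  define u where "u k x = \<psi>1 k x + \<psi>2 k x" for k x
  have u: "u k \<in> Cb" "0 \<le> u k x" for k x
    unfolding u_def using 1(1,2) 2(1,2) by (auto intro: Cb_add)
  have "ennreal (\<psi> x) \<le> (SUP k. ennreal (u k x))" for x
  proof -
    have "(SUP k. ennreal (u k x)) = (SUP k. ennreal (\<psi>1 k x) + ennreal (\<psi>2 k x))"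
      unfolding u_def using 1(2) 2(2) by (simp add: ennreal_plus)
    also have "\<dots> = f1 x + f2 x"
      using 1(4,5) 2(4,5) by (subst ennreal_SUP_add) (auto simp: incseq_def intro: ennreal_leI)
    finally show ?thesis using \<psi>(3) by simp
  qed
  moreover have "incseq (\<lambda>k. u k x)" for x
    using 1(4) 2(4) by (auto simp: incseq_def u_def intro: add_mono)
  ultimately have lim: "(\<lambda>k. min (\<psi> x) (u k x)) \<longlonglongrightarrow> \<psi> x" for x
    using u by (intro tendsto_min_incseq)
  obtain B where B: "\<forall>x. \<bar>\<psi> x\<bar> \<le> B" using Cb_bounded[OF \<psi>(1)] by auto
  show "cap_Cb \<P> p \<psi> \<le> cap_lsc \<P> p f1 + cap_lsc \<P> p f2"
    unfolding cap_Cb_eq_SUP_Lp_norm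
  proof (intro SUP_least)
    fix P assume "P \<in> \<P>"
    with \<P> have P: "borel_prob P" by auto
    have "(\<lambda>k. Lp_norm P p (\<lambda>x. min (\<psi> x) (u k x))) \<longlonglongrightarrow> Lp_norm P p \<psi>"
      using B \<psi>(2) u(2) lim
      by (intro Lp_norm_tendsto[OF P p0 Cb_min[OF \<psi>(1) u(1)] \<psi>(1), of _ B]) (auto simp: min_le_iff_disj)
    then show "ennreal (Lp_norm P p \<psi>) \<le> cap_lsc \<P> p f1 + cap_lsc \<P> p f2"
    proof (rule LIMSEQ_le_const2[OF tendsto_ennrealI], intro exI allI impI)
      fix k
      have "Lp_norm P p (\<lambda>x. min (\<psi> x) (u k x)) \<le> Lp_norm P p (u k)"
        using P \<psi> u p0 by (intro Lp_norm_mono Cb_min) auto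
      also have "\<dots> \<le> Lp_norm P p (\<psi>1 k) + Lp_norm P p (\<psi>2 k)"
        unfolding u_def using P 1(1) 2(1) p by (rule Lp_norm_triangle)
      finally have "ennreal (Lp_norm P p (\<lambda>x. min (\<psi> x) (u k x)))
          \<le> ennreal (Lp_norm P p (\<psi>1 k)) + ennreal (Lp_norm P p (\<psi>2 k))"
        by (simp add: ennreal_plus[symmetric] ennreal_leI del: ennreal_plus)
      also have "\<dots> \<le> cap_lsc \<P> p f1 + cap_lsc \<P> p f2"
        using \<open>P \<in> \<P>\<close> 1 2
        by (intro add_mono order_trans[OF Lp_norm_le_cap_Cb cap_Cb_le_cap_lsc]) auto
      finally show "ennreal (Lp_norm P p (\<lambda>x. min (\<psi> x) (u k x))) \<le> cap_lsc \<P> p f1 + cap_lsc \<P> p f2" .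
    qed
  qed
qed

lemma cap_add_le:
  fixes a b :: "'a::metric_space \<Rightarrow> real"
  assumes \<P>: "\<forall>P\<in>\<P>. borel_prob P" and p: "1 \<le> p"
  shows "cap \<P> p (\<lambda>x. a x + b x) \<le> cap \<P> p a + cap \<P> p b"
proof (rule ennreal_le_epsilon)
  fix e :: real assume fin: "cap \<P> p a + cap \<P> p b < top" and e: "0 < e"
  have "cap \<P> p a < cap \<P> p a + ennreal (e/2)" "cap \<P> p b < cap \<P> p b + ennreal (e/2)"
    using fin e by auto
  then obtain f1 f2 where
      f1: "lsc f1" "\<forall>x. ennreal \<bar>a x\<bar> \<le> f1 x" "cap_lsc \<P> p f1 < cap \<P> p a + ennreal (e/2)"
    and f2: "lsc f2" "\<forall>x. ennreal \<bar>b x\<bar> \<le> f2 x" "cap_lsc \<P> p f2 < cap \<P> p b + ennreal (e/2)"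
    unfolding cap_def[of _ _ a] cap_def[of _ _ b] by (auto simp: INF_less_iff)
  have "cap \<P> p (\<lambda>x. a x + b x) \<le> cap_lsc \<P> p (\<lambda>x. f1 x + f2 x)"
  proof (rule cap_le_cap_lsc)
    show "lsc (\<lambda>x. f1 x + f2 x)" using f1 f2 by (intro lsc_add) auto
    fix x
    have "ennreal \<bar>a x + b x\<bar> \<le> ennreal \<bar>a x\<bar> + ennreal \<bar>b x\<bar>"
      by (simp add: ennreal_plus[symmetric] ennreal_leI del: ennreal_plus)
    also have "\<dots> \<le> f1 x + f2 x" using f1 f2 by (intro add_mono) auto
    finally show "ennreal \<bar>a x + b x\<bar> \<le> f1 x + f2 x" .
  qed
  also have "\<dots> \<le> cap_lsc \<P> p f1 + cap_lsc \<P> p f2" using \<P> p f1 f2 by (intro cap_lsc_add) auto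
  also have "\<dots> \<le> (cap \<P> p a + ennreal (e/2)) + (cap \<P> p b + ennreal (e/2))"
    using f1 f2 by (intro add_mono) auto
  also have "\<dots> = cap \<P> p a + cap \<P> p b + ennreal e"
    using e by (simp add: ennreal_plus[symmetric] add_ac del: ennreal_plus)
  finally show "cap \<P> p (\<lambda>x. a x + b x) \<le> cap \<P> p a + cap \<P> p b + ennreal e" .
qed

lemma cap_diff_le:
  fixes g :: "'a::metric_space \<Rightarrow> real"
  assumes "\<forall>P\<in>\<P>. borel_prob P" and "1 \<le> p"
  shows "cap \<P> p (\<lambda>x. \<phi> x - \<psi> x) \<le> cap \<P> p (\<lambda>x. g x - \<phi> x) + cap \<P> p (\<lambda>x. g x - \<psi> x)"
proof -
  have "cap \<P> p (\<lambda>x. \<phi> x - \<psi> x) = cap \<P> p (\<lambda>x. (\<phi> x - g x) + (g x - \<psi> x))" by simp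
  also have "\<dots> \<le> cap \<P> p (\<lambda>x. \<phi> x - g x) + cap \<P> p (\<lambda>x. g x - \<psi> x)"
    using assms by (rule cap_add_le)
  finally show ?thesis by (simp add: cap_diff_commute[of _ _ \<phi> g])
qed

section \<open>The continuous extension of a measure in \<open>M\<^sup>+(c\<^sub>p)\<close>\<close>

lemma MplusE:
  assumes "\<mu> \<in> Mplus \<P> p"
  obtains C where "0 \<le> C" "\<And>\<phi>. \<phi> \<in> Cb \<Longrightarrow> ennreal \<bar>integral\<^sup>L \<mu> \<phi>\<bar> \<le> ennreal C * cap \<P> p \<phi>"
proof -
  obtain C where C: "\<forall>\<phi>\<in>Cb. ennreal \<bar>integral\<^sup>L \<mu> \<phi>\<bar> \<le> ennreal C * cap \<P> p \<phi>"
    using assms by (auto simp: Mplus_def)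
  have "ennreal C = ennreal (max 0 C)" by (cases "C \<le> 0") (auto simp: ennreal_eq_0_iff max_def)
  then show ?thesis using that[of "max 0 C"] C by auto
qed

lemma Mplus_borel_finite: "\<mu> \<in> Mplus \<P> p \<Longrightarrow> borel_finite \<mu>"
  by (simp add: Mplus_def)

lemma Mplus_integral_diff_le:
  fixes g :: "'a::metric_space \<Rightarrow> real"
  assumes "\<forall>P\<in>\<P>. borel_prob P" "1 \<le> p" "\<mu> \<in> Mplus \<P> p"
    and C: "\<And>\<phi>. \<phi> \<in> Cb \<Longrightarrow> ennreal \<bar>integral\<^sup>L \<mu> \<phi>\<bar> \<le> ennreal C * cap \<P> p \<phi>"
    and \<phi>: "\<phi> \<in> Cb" and \<psi>: "\<psi> \<in> Cb"
  shows "ennreal \<bar>integral\<^sup>L \<mu> \<phi> - integral\<^sup>L \<mu> \<psi>\<bar>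
    \<le> ennreal C * (cap \<P> p (\<lambda>x. g x - \<phi> x) + cap \<P> p (\<lambda>x. g x - \<psi> x))"
proof -
  have "integral\<^sup>L \<mu> \<phi> - integral\<^sup>L \<mu> \<psi> = integral\<^sup>L \<mu> (\<lambda>x. \<phi> x - \<psi> x)"
    using \<phi> \<psi> Mplus_borel_finite[OF assms(3)] by (simp add: Cb_integrable)
  then have "ennreal \<bar>integral\<^sup>L \<mu> \<phi> - integral\<^sup>L \<mu> \<psi>\<bar> \<le> ennreal C * cap \<P> p (\<lambda>x. \<phi> x - \<psi> x)"
    using C[OF Cb_diff[OF \<phi> \<psi>]] by simp
  also have "\<dots> \<le> ennreal C * (cap \<P> p (\<lambda>x. g x - \<phi> x) + cap \<P> p (\<lambda>x. g x - \<psi> x))"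
    using assms(1,2) by (intro mult_left_mono cap_diff_le) auto
  finally show ?thesis .
qed

definition is_ext_val ::
    "'a::topological_space measure set \<Rightarrow> real \<Rightarrow> 'a measure \<Rightarrow> ('a \<Rightarrow> real) \<Rightarrow> real \<Rightarrow> bool"
  where
  "is_ext_val \<P> p \<mu> g v \<longleftrightarrow> (\<forall>e>0. \<exists>d>0. \<forall>\<phi>\<in>Cb.
       cap \<P> p (\<lambda>x. g x - \<phi> x) < ennreal d \<longrightarrow> \<bar>integral\<^sup>L \<mu> \<phi> - v\<bar> < e)"

lemma is_ext_val_tendsto:
  assumes "is_ext_val \<P> p \<mu> g v" "\<And>k. fs k \<in> Cb" "(\<lambda>k. cap \<P> p (\<lambda>x. g x - fs k x)) \<longlonglongrightarrow> 0"
  shows "(\<lambda>k. integral\<^sup>L \<mu> (fs k)) \<longlonglongrightarrow> v"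
proof (rule LIMSEQ_I)
  fix r :: real assume "0 < r"
  then obtain d where d: "0 < d"
    "\<forall>\<phi>\<in>Cb. cap \<P> p (\<lambda>x. g x - \<phi> x) < ennreal d \<longrightarrow> \<bar>integral\<^sup>L \<mu> \<phi> - v\<bar> < r"
    using assms(1) unfolding is_ext_val_def by blast
  then have "\<forall>\<^sub>F k in sequentially. cap \<P> p (\<lambda>x. g x - fs k x) < ennreal d"
    using order_tendstoD(2)[OF assms(3)] by simp
  then show "\<exists>no. \<forall>n\<ge>no. norm (integral\<^sup>L \<mu> (fs n) - v) < r"
    using d assms(2) by (auto simp: eventually_sequentially)
qed

lemma L1cap_approx:
  assumes "g \<in> L1cap \<P> p"
  obtains a where "\<And>k. a k \<in> Cb" "\<And>k. cap \<P> p (\<lambda>x. g x - a k x) \<le> ennreal (1 / Suc k)"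
    "(\<lambda>k. cap \<P> p (\<lambda>x. g x - a k x)) \<longlonglongrightarrow> 0"
proof -
  have "\<forall>k. \<exists>\<phi>\<in>Cb. cap \<P> p (\<lambda>x. g x - \<phi> x) < ennreal (1 / Suc k)"
    using assms by (auto simp: L1cap_def)
  then obtain a where a: "\<And>k. a k \<in> Cb" "\<And>k. cap \<P> p (\<lambda>x. g x - a k x) \<le> ennreal (1 / Suc k)"
    by (metis less_imp_le)
  moreover have "(\<lambda>k. cap \<P> p (\<lambda>x. g x - a k x)) \<longlonglongrightarrow> 0"
  proof (rule tendsto_sandwich[where f="\<lambda>k. 0" and h="\<lambda>k. ennreal (1 / Suc k)"])
    show "(\<lambda>k. ennreal (1 / Suc k)) \<longlonglongrightarrow> 0"
      using tendsto_ennrealI[OF LIMSEQ_Suc[OF lim_inverse_n']] by (simp add: divide_inverse)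
  qed (use a in auto)
  ultimately show ?thesis using that by blast
qed

text \<open>The continuous extension exists: \<open>\<mu>(g)\<close> is the limit of \<open>\<mu>(a\<^sub>k)\<close> for any
  \<open>c\<^sub>p\<close>-approximation \<open>a\<^sub>k\<close> of \<open>g\<close>, and it inherits the bound \<open>C c\<^sub>p\<close>.\<close>
lemma ext_val_exists:
  fixes g :: "'a::metric_space \<Rightarrow> real"
  assumes \<P>: "\<forall>P\<in>\<P>. borel_prob P" and p: "1 \<le> p" and \<mu>: "\<mu> \<in> Mplus \<P> p"
    and g: "g \<in> L1cap \<P> p" and C0: "0 \<le> C"
    and C: "\<And>\<phi>. \<phi> \<in> Cb \<Longrightarrow> ennreal \<bar>integral\<^sup>L \<mu> \<phi>\<bar> \<le> ennreal C * cap \<P> p \<phi>"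
  obtains v where "\<And>\<phi>. \<phi> \<in> Cb \<Longrightarrow> ennreal \<bar>integral\<^sup>L \<mu> \<phi> - v\<bar> \<le> ennreal C * cap \<P> p (\<lambda>x. g x - \<phi> x)"
proof -
  obtain a where a: "\<And>k. a k \<in> Cb" "\<And>k. cap \<P> p (\<lambda>x. g x - a k x) \<le> ennreal (1 / Suc k)"
    and lim: "(\<lambda>k. cap \<P> p (\<lambda>x. g x - a k x)) \<longlonglongrightarrow> 0"
    using L1cap_approx[OF g] by blast
  have est: "ennreal \<bar>integral\<^sup>L \<mu> \<phi> - integral\<^sup>L \<mu> \<psi>\<bar>
      \<le> ennreal C * (cap \<P> p (\<lambda>x. g x - \<phi> x) + cap \<P> p (\<lambda>x. g x - \<psi> x))"
    if "\<phi> \<in> Cb" "\<psi> \<in> Cb" for \<phi> \<psi>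
    using \<P> p \<mu> C that by (rule Mplus_integral_diff_le)
  have "Cauchy (\<lambda>k. integral\<^sup>L \<mu> (a k))"
  proof (rule CauchyI)
    fix e :: real assume e: "0 < e"
    obtain M :: nat where M: "2 * C / e < M" using reals_Archimedean2 by blast
    have "\<bar>integral\<^sup>L \<mu> (a m) - integral\<^sup>L \<mu> (a n)\<bar> < e" if "M \<le> m" "M \<le> n" for m n
    proof -
      have "ennreal \<bar>integral\<^sup>L \<mu> (a m) - integral\<^sup>L \<mu> (a n)\<bar>
          \<le> ennreal C * (cap \<P> p (\<lambda>x. g x - a m x) + cap \<P> p (\<lambda>x. g x - a n x))"
        by (rule est[OF a(1) a(1)])
      also have "\<dots> \<le> ennreal C * (ennreal (1 / Suc m) + ennreal (1 / Suc n))"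
        by (intro mult_left_mono add_mono a(2)) simp
      also have "\<dots> = ennreal (C * (1 / Suc m + 1 / Suc n))"
        using C0 by (simp add: ennreal_mult)
      finally have "\<bar>integral\<^sup>L \<mu> (a m) - integral\<^sup>L \<mu> (a n)\<bar> \<le> C * (1 / Suc m + 1 / Suc n)"
        using C0 by (simp add: ennreal_le_iff)
      also have "\<dots> \<le> C * (1 / Suc M + 1 / Suc M)"
        using that C0 by (intro mult_left_mono add_mono divide_left_mono) auto
      also have "\<dots> < e" using M e C0 by (simp add: field_simps)
      finally show ?thesis .
    qed
    then show "\<exists>M. \<forall>m\<ge>M. \<forall>n\<ge>M. norm (integral\<^sup>L \<mu> (a m) - integral\<^sup>L \<mu> (a n)) < e" by auto
  qed
  then obtain v where v: "(\<lambda>k. integral\<^sup>L \<mu> (a k)) \<longlonglongrightarrow> v"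
    using convergent_eq_Cauchy convergent_def by blast
  have "ennreal \<bar>integral\<^sup>L \<mu> \<phi> - v\<bar> \<le> ennreal C * cap \<P> p (\<lambda>x. g x - \<phi> x)" if \<phi>: "\<phi> \<in> Cb" for \<phi>
  proof (rule LIMSEQ_le)
    show "(\<lambda>k. ennreal \<bar>integral\<^sup>L \<mu> \<phi> - integral\<^sup>L \<mu> (a k)\<bar>) \<longlonglongrightarrow> ennreal \<bar>integral\<^sup>L \<mu> \<phi> - v\<bar>"
      by (intro tendsto_ennrealI tendsto_intros v)
    show "(\<lambda>k. ennreal C * (cap \<P> p (\<lambda>x. g x - \<phi> x) + cap \<P> p (\<lambda>x. g x - a k x)))
        \<longlonglongrightarrow> ennreal C * cap \<P> p (\<lambda>x. g x - \<phi> x)"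
      using ennreal_tendsto_cmult[OF _ tendsto_add[OF tendsto_const lim]] by simp
  qed (use est[OF \<phi> a(1)] in auto)
  then show ?thesis using that by blast
qed

lemma ext_val_tendsto:
  fixes g :: "'a::metric_space \<Rightarrow> real"
  assumes \<P>: "\<forall>P\<in>\<P>. borel_prob P" and p: "1 \<le> p" and \<mu>: "\<mu> \<in> Mplus \<P> p"
    and g: "g \<in> L1cap \<P> p"
    and fs: "\<And>k. fs k \<in> Cb" and lim: "(\<lambda>k. cap \<P> p (\<lambda>x. g x - fs k x)) \<longlonglongrightarrow> 0"
  shows "(\<lambda>k. integral\<^sup>L \<mu> (fs k)) \<longlonglongrightarrow> ext_val \<P> p \<mu> g"
proof -
  obtain C where C0: "0 \<le> C"
    and C: "\<And>\<phi>. \<phi> \<in> Cb \<Longrightarrow> ennreal \<bar>integral\<^sup>L \<mu> \<phi>\<bar> \<le> ennreal C * cap \<P> p \<phi>"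
    using MplusE[OF \<mu>] by blast
  obtain v where v: "\<And>\<phi>. \<phi> \<in> Cb \<Longrightarrow> ennreal \<bar>integral\<^sup>L \<mu> \<phi> - v\<bar> \<le> ennreal C * cap \<P> p (\<lambda>x. g x - \<phi> x)"
    using ext_val_exists[OF \<P> p \<mu> g C0 C] by blast
  have "is_ext_val \<P> p \<mu> g v"
    unfolding is_ext_val_def
  proof (intro allI impI exI conjI ballI)
    fix e :: real and \<phi> assume e: "0 < e" and \<phi>: "\<phi> \<in> Cb"
      and "cap \<P> p (\<lambda>x. g x - \<phi> x) < ennreal (e / (C + 1))"
    then have "ennreal C * cap \<P> p (\<lambda>x. g x - \<phi> x) \<le> ennreal C * ennreal (e / (C + 1))"
      by (intro mult_left_mono) auto
    with v[OF \<phi>] have "ennreal \<bar>integral\<^sup>L \<mu> \<phi> - v\<bar> \<le> ennreal C * ennreal (e / (C + 1))"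
      by (rule order_trans)
    then have "\<bar>integral\<^sup>L \<mu> \<phi> - v\<bar> \<le> C * (e / (C + 1))"
      using C0 e by (simp add: ennreal_mult[symmetric] ennreal_le_iff)
    also have "\<dots> < e" using C0 e by (simp add: field_simps)
    finally show "\<bar>integral\<^sup>L \<mu> \<phi> - v\<bar> < e" .
  qed (use C0 in simp)
  moreover have "w = v" if "is_ext_val \<P> p \<mu> g w" for w
  proof -
    obtain a where "\<And>k. a k \<in> Cb" "(\<lambda>k. cap \<P> p (\<lambda>x. g x - a k x)) \<longlonglongrightarrow> 0"
      using L1cap_approx[OF g] by blast
    then show ?thesis
      using LIMSEQ_unique is_ext_val_tendsto[OF that] is_ext_val_tendsto[OF \<open>is_ext_val \<P> p \<mu> g v\<close>]
      by blast
  qed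
  ultimately have "ext_val \<P> p \<mu> g = v"
    unfolding ext_val_def is_ext_val_def[symmetric] by (intro the_equality)
  then show ?thesis using is_ext_val_tendsto[OF \<open>is_ext_val \<P> p \<mu> g v\<close> fs lim] by simp
qed

lemma ext_val_eq_0_if_cap_eq_0:
  fixes g :: "'a::metric_space \<Rightarrow> real"
  assumes "\<forall>P\<in>\<P>. borel_prob P" "1 \<le> p" "\<mu> \<in> Mplus \<P> p" "g \<in> L1cap \<P> p" "cap \<P> p g = 0"
  shows "ext_val \<P> p \<mu> g = 0"
proof -
  have "(\<lambda>k. 0) \<longlonglongrightarrow> ext_val \<P> p \<mu> g"
    using ext_val_tendsto[OF assms(1-4), of "\<lambda>k x. 0"] assms(5) by simp
  then show ?thesis by (rule LIMSEQ_unique[OF tendsto_const, symmetric])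
qed

section \<open>Countable mixtures\<close>

definition weights :: "(nat \<Rightarrow> real) \<Rightarrow> nat measure" where
  "weights \<alpha> = density (count_space UNIV) (\<lambda>n. ennreal (\<alpha> n))"

lemma space_weights [simp]: "space (weights \<alpha>) = UNIV"
  by (simp add: weights_def)

lemma measurable_borel_prob_family:
  assumes "\<forall>n. borel_prob (Q n)"
  shows "Q \<in> measurable (weights \<alpha>) (subprob_algebra (borel :: 'a::topological_space measure))"
proof -
  have "Q \<in> measurable (count_space UNIV) (subprob_algebra (borel :: 'a measure))"
    using assms by (auto simp: space_subprob_algebra borel_prob_def prob_space_imp_subprob_space)
  then show ?thesis unfolding weights_def by (simp add: measurable_cong_sets)
qed

lemma nn_integral_weights:
  "(\<integral>\<^sup>+n. f n \<partial>weights \<alpha>) = (\<Sum>n. ennreal (\<alpha> n) * f n)"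
  unfolding weights_def by (simp add: nn_integral_density nn_integral_count_space_nat)

lemma mixture_eq_bind:
  fixes Q :: "nat \<Rightarrow> 'a::topological_space measure"
  assumes Q: "\<forall>n. borel_prob (Q n)"
  shows "mixture \<alpha> Q = weights \<alpha> \<bind> Q"
proof -
  let ?B = "weights \<alpha> \<bind> Q"
  have sB: "sets ?B = sets borel"
    using Q by (intro sets_bind) (auto simp: borel_prob_def weights_def)
  have "emeasure ?B A = (\<Sum>n. ennreal (\<alpha> n) * emeasure (Q n) A)" if "A \<in> sets borel" for A
    using measurable_borel_prob_family[OF Q] that
    by (subst emeasure_bind[where N=borel]) (auto simp: nn_integral_weights)
  then have "mixture \<alpha> Q = measure_of UNIV (sets borel) (emeasure ?B)"
    unfolding mixture_def by (intro measure_of_eq) (auto simp: sets.sigma_sets_eq[of borel, simplified])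
  also have "\<dots> = ?B"
    using sB sets_eq_imp_space_eq[OF sB] measure_of_of_measure[of ?B] by simp
  finally show ?thesis .
qed

lemma nn_integral_mixture:
  assumes Q: "\<forall>n. borel_prob (Q n)" and f: "f \<in> borel_measurable borel"
  shows "(\<integral>\<^sup>+x. f x \<partial>mixture \<alpha> Q) = (\<Sum>n. ennreal (\<alpha> n) * (\<integral>\<^sup>+x. f x \<partial>Q n))"
  unfolding mixture_eq_bind[OF Q]
  by (simp add: nn_integral_bind[OF f measurable_borel_prob_family[OF Q]] nn_integral_weights)

lemma borel_finite_mixture:
  assumes Q: "\<forall>n. borel_prob (Q n)" and \<alpha>: "\<forall>n. 0 \<le> \<alpha> n" "\<alpha> sums 1"
  shows "borel_finite (mixture \<alpha> Q)"
proof -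
  have sets: "sets (mixture \<alpha> Q) = sets borel"
    using Q by (simp add: mixture_eq_bind sets_bind weights_def borel_prob_def)
  have "(\<integral>\<^sup>+x. 1 \<partial>Q n) = 1" for n
    using Q by (simp add: borel_prob_def prob_space.emeasure_space_1)
  then have "emeasure (mixture \<alpha> Q) (space (mixture \<alpha> Q)) = (\<Sum>n. ennreal (\<alpha> n))"
    using nn_integral_mixture[OF Q, of "\<lambda>x. 1" \<alpha>] by simp
  also have "\<dots> = ennreal 1" using \<alpha> by (subst suminf_ennreal2) (auto simp: sums_iff)
  finally show ?thesis
    unfolding borel_finite_def using sets by (auto intro: finite_measureI)
qed

lemma nn_integral_le_mixture:
  assumes Q: "\<forall>n. borel_prob (Q n)" and f: "f \<in> borel_measurable borel"
  shows "ennreal (\<alpha> n) * (\<integral>\<^sup>+x. f x \<partial>Q n) \<le> (\<integral>\<^sup>+x. f x \<partial>mixture \<alpha> Q)"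
  unfolding nn_integral_mixture[OF Q f]
  using sum_le_suminf[of "\<lambda>m. ennreal (\<alpha> m) * (\<integral>\<^sup>+x. f x \<partial>Q m)" "{n}"] by simp

section \<open>Mixtures of a norming sequence are canonical\<close>

lemma mixture_in_Mplus:
  fixes \<P> :: "'a::metric_space measure set"
  assumes \<P>: "\<forall>P\<in>\<P>. borel_prob P" and p: "1 \<le> p" and Q: "\<forall>n. borel_prob (Q n)"
    and \<alpha>: "\<forall>n. 0 < \<alpha> n" "\<alpha> sums 1"
    and norming: "\<And>n \<phi>. \<phi> \<in> Cb \<Longrightarrow> ennreal (Lp_norm (Q n) p \<phi>) \<le> cap_Cb \<P> p \<phi>"
  shows "mixture \<alpha> Q \<in> Mplus \<P> p"
proof -
  let ?\<mu> = "mixture \<alpha> Q"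
  have bf: "borel_finite ?\<mu>" using Q \<alpha> by (intro borel_finite_mixture) (auto intro: less_imp_le)
  have "ennreal \<bar>integral\<^sup>L ?\<mu> \<phi>\<bar> \<le> ennreal 1 * cap \<P> p \<phi>" if \<phi>: "\<phi> \<in> Cb" for \<phi>
  proof -
    have abs: "(\<lambda>x. \<bar>\<phi> x\<bar>) \<in> Cb" using \<phi> by (rule Cb_abs)
    have "ennreal \<bar>integral\<^sup>L ?\<mu> \<phi>\<bar> \<le> (\<integral>\<^sup>+x. ennreal \<bar>\<phi> x\<bar> \<partial>?\<mu>)"
      using nn_integral_Cb[OF bf abs] by (simp add: ennreal_leI integral_abs_bound)
    also have "\<dots> = (\<Sum>n. ennreal (\<alpha> n) * (\<integral>\<^sup>+x. ennreal \<bar>\<phi> x\<bar> \<partial>Q n))"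
      using Q Cb_measurable[OF abs, of borel] by (intro nn_integral_mixture) auto
    also have "\<dots> \<le> (\<Sum>n. ennreal (\<alpha> n) * cap_Cb \<P> p \<phi>)"
    proof (intro suminf_le mult_left_mono)
      fix n
      have "(\<integral>\<^sup>+x. ennreal \<bar>\<phi> x\<bar> \<partial>Q n) = ennreal (\<integral>x. \<bar>\<phi> x\<bar> \<partial>Q n)"
        using nn_integral_Cb[OF borel_prob_imp_borel_finite abs] Q by simp
      also have "\<dots> \<le> ennreal (Lp_norm (Q n) p \<phi>)"
        using Q \<phi> p by (intro ennreal_leI integral_abs_le_Lp_norm) auto
      also have "\<dots> \<le> cap_Cb \<P> p \<phi>" using norming \<phi> by auto
      finally show "(\<integral>\<^sup>+x. ennreal \<bar>\<phi> x\<bar> \<partial>Q n) \<le> cap_Cb \<P> p \<phi>" .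
    qed auto
    also have "\<dots> = cap \<P> p \<phi>"
      using \<alpha> cap_eq_cap_Cb[OF \<P> \<phi>] p
      by (simp add: ennreal_suminf_multc suminf_ennreal2 sums_iff less_imp_le)
    finally show ?thesis by simp
  qed
  then show ?thesis using bf unfolding Mplus_def by blast
qed

lemma Lp_norm_min_le:
  assumes Q: "borel_prob Q" and p: "1 \<le> p" and f: "f \<in> Cb" "\<And>x. 0 \<le> f x" and M: "0 \<le> M"
  shows "Lp_norm Q p (\<lambda>x. min (f x) M) \<le> (M powr (p - 1) * integral\<^sup>L Q f) powr (1 / p)"
proof -
  have pointwise: "\<bar>min (f x) M\<bar> powr p \<le> M powr (p - 1) * f x" for x
  proof -
    define y where "y = min (f x) M"
    have y: "0 \<le> y" "y \<le> M" "y \<le> f x" using f(2)[of x] M unfolding y_def by auto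
    have "\<bar>y\<bar> powr p = y powr ((p - 1) + 1)" using y by simp
    also have "\<dots> = y powr (p - 1) * y powr 1" by (rule powr_add)
    also have "\<dots> \<le> M powr (p - 1) * f x"
      using y p by (intro mult_mono powr_mono2) auto
    finally show ?thesis unfolding y_def .
  qed
  have "(\<integral>x. \<bar>min (f x) M\<bar> powr p \<partial>Q) \<le> (\<integral>x. M powr (p - 1) * f x \<partial>Q)"
    using pointwise p Q f(1)
    by (intro integral_mono integrable_Cb_abs_powr Cb_min integrable_mult_right
        Cb_integrable borel_prob_imp_borel_finite) auto
  then show ?thesis
    unfolding Lp_norm_def using p by (intro powr_mono2) (auto intro: integral_abs_powr_nonneg)
qed

lemma Lp_norm_diff_commute: "Lp_norm P p (\<lambda>x. f x - g x) = Lp_norm P p (\<lambda>x. g x - f x)"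
  by (simp add: Lp_norm_def abs_minus_commute)

text \<open>If non-negative \<open>f\<^sub>m\<close> stay \<open>\<delta>\<close>-close to \<open>f\<^sub>K\<close> in \<open>L\<^sup>p(Q)\<close> while \<open>\<integral>f\<^sub>m dQ \<rightarrow> 0\<close>, then
  \<open>\<parallel>f\<^sub>K\<parallel>\<^sub>p \<le> 2\<delta>\<close>: split \<open>f\<^sub>m\<close> at the level \<open>M \<ge> sup f\<^sub>K\<close>; the part below \<open>M\<close> is small
  in \<open>L\<^sup>1\<close>, hence in \<open>L\<^sup>p\<close>, and the part above \<open>M\<close> is dominated by \<open>\<bar>f\<^sub>m - f\<^sub>K\<bar>\<close>.\<close>
lemma Lp_norm_le_if_integral_tendsto_0:
  assumes Q: "borel_prob Q" and p: "1 \<le> p"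
    and fs: "\<And>m. fs m \<in> Cb" "\<And>m x. 0 \<le> fs m x"
    and lim: "(\<lambda>m. integral\<^sup>L Q (fs m)) \<longlonglongrightarrow> 0"
    and close: "\<And>m. K \<le> m \<Longrightarrow> Lp_norm Q p (\<lambda>x. fs m x - fs K x) \<le> \<delta>"
  shows "Lp_norm Q p (fs K) \<le> 2 * \<delta>"
proof -
  have p0: "0 < p" using p by simp
  obtain B where B: "\<And>x. \<bar>fs K x\<bar> \<le> B" using Cb_bounded[OF fs(1)] by auto
  define M where "M = max 0 B"
  have M: "0 \<le> M" "\<And>x. fs K x \<le> M" using B unfolding M_def by (auto simp: abs_le_iff le_max_iff_disj)
  define c where "c m = (M powr (p - 1) * integral\<^sup>L Q (fs m)) powr (1 / p)" for m
  have c: "c \<longlonglongrightarrow> 0"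
    unfolding c_def
    by (rule tendsto_zero_powrI[OF tendsto_mult_right_zero[OF lim] tendsto_const])
      (use p0 fs(2) in \<open>auto intro!: always_eventually mult_nonneg_nonneg integral_nonneg_AE\<close>)
  have "Lp_norm Q p (fs K) \<le> 2 * \<delta> + c m" if m: "K \<le> m" for m
  proof -
    have low: "(\<lambda>x. min (fs m x) M) \<in> Cb" and high: "(\<lambda>x. max 0 (fs m x - M)) \<in> Cb"
      using fs(1) by (auto intro!: Cb_min Cb_max Cb_diff)
    have high_le: "\<bar>max 0 (fs m x - M)\<bar> \<le> \<bar>fs m x - fs K x\<bar>" for x
      using M(2)[of x] by (cases "fs m x \<le> M") (simp_all add: max_def)
    have split: "fs m = (\<lambda>x. min (fs m x) M + max 0 (fs m x - M))"
      by (auto simp: fun_eq_iff min_def max_def)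
    have "Lp_norm Q p (fs K) = Lp_norm Q p (\<lambda>x. (fs K x - fs m x) + fs m x)" by simp
    also have "\<dots> \<le> Lp_norm Q p (\<lambda>x. fs K x - fs m x) + Lp_norm Q p (fs m)"
      using Q Cb_diff[OF fs(1) fs(1)] fs(1) p by (rule Lp_norm_triangle)
    also have "Lp_norm Q p (fs m)
        \<le> Lp_norm Q p (\<lambda>x. min (fs m x) M) + Lp_norm Q p (\<lambda>x. max 0 (fs m x - M))"
      using Lp_norm_triangle[OF Q low high p] by (simp flip: split)
    also have "Lp_norm Q p (\<lambda>x. max 0 (fs m x - M)) \<le> Lp_norm Q p (\<lambda>x. fs m x - fs K x)"
      using high_le by (intro Lp_norm_mono[OF Q high Cb_diff[OF fs(1) fs(1)] p0])
    also have "Lp_norm Q p (\<lambda>x. min (fs m x) M) \<le> c m"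
      unfolding c_def using Q p fs M(1) by (rule Lp_norm_min_le)
    finally show ?thesis using close[OF m] Lp_norm_diff_commute[of Q p "fs K" "fs m"] by linarith
  qed
  then have "Lp_norm Q p (fs K) \<le> 2 * \<delta> + 0"
    by (intro LIMSEQ_le_const[OF tendsto_add[OF tendsto_const c]]) auto
  then show ?thesis by simp
qed

lemma integral_tendsto_0_if_mixture:
  assumes Q: "\<forall>n. borel_prob (Q n)" and \<alpha>: "\<forall>n. 0 < \<alpha> n" "\<alpha> sums 1"
    and fs: "\<And>k. fs k \<in> Cb" "\<And>k x. 0 \<le> fs k x"
    and lim: "(\<lambda>k. integral\<^sup>L (mixture \<alpha> Q) (fs k)) \<longlonglongrightarrow> 0"
  shows "(\<lambda>k. integral\<^sup>L (Q n) (fs k)) \<longlonglongrightarrow> 0"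
proof (rule tendsto_sandwich[where f="\<lambda>k. 0" and h="\<lambda>k. integral\<^sup>L (mixture \<alpha> Q) (fs k) / \<alpha> n"])
  have bf: "borel_finite (mixture \<alpha> Q)" "borel_finite (Q n)"
    using Q \<alpha> by (auto intro: borel_finite_mixture borel_prob_imp_borel_finite less_imp_le)
  have "ennreal (\<alpha> n) * ennreal (integral\<^sup>L (Q n) (fs k)) \<le> ennreal (integral\<^sup>L (mixture \<alpha> Q) (fs k))" for k
    using nn_integral_le_mixture[OF Q, of "\<lambda>x. ennreal (fs k x)" \<alpha> n]
      Cb_measurable[OF fs(1), of borel] nn_integral_Cb[OF bf(1) fs] nn_integral_Cb[OF bf(2) fs]
    by simp
  moreover have "0 \<le> integral\<^sup>L M (fs k)" for M k using fs(2) by (intro integral_nonneg_AE) auto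
  ultimately have "\<alpha> n * integral\<^sup>L (Q n) (fs k) \<le> integral\<^sup>L (mixture \<alpha> Q) (fs k)" for k
    using \<alpha> by (simp add: ennreal_mult[symmetric] ennreal_le_iff less_imp_le)
  then show "\<forall>\<^sub>F k in sequentially. integral\<^sup>L (Q n) (fs k) \<le> integral\<^sup>L (mixture \<alpha> Q) (fs k) / \<alpha> n"
    using \<alpha> by (intro always_eventually allI) (simp add: field_simps mult.commute)
  show "\<forall>\<^sub>F k in sequentially. 0 \<le> integral\<^sup>L (Q n) (fs k)"
    using fs(2) by (intro always_eventually allI integral_nonneg_AE) auto
  show "(\<lambda>k. integral\<^sup>L (mixture \<alpha> Q) (fs k) / \<alpha> n) \<longlonglongrightarrow> 0"
    using tendsto_divide_zero[OF lim] by simp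
qed simp

lemma cap_eq_0_if_mixture_ext_val_eq_0:
  fixes \<P> :: "'a::metric_space measure set"
  assumes \<P>: "\<forall>P\<in>\<P>. borel_prob P" and p: "1 \<le> p" and Q: "\<forall>n. borel_prob (Q n)"
    and \<alpha>: "\<forall>n. 0 < \<alpha> n" "\<alpha> sums 1"
    and norming: "\<And>\<phi>. \<phi> \<in> Cb \<Longrightarrow> cap_Cb \<P> p \<phi> = (SUP n. ennreal (Lp_norm (Q n) p \<phi>))"
    and g: "g \<in> L1cap \<P> p" "L1nonneg \<P> p g" and ev0: "ext_val \<P> p (mixture \<alpha> Q) g = 0"
  shows "cap \<P> p g = 0"
proof -
  have p0: "0 < p" using p by simp
  have "L1eq \<P> p g g" by (simp add: L1eq_def)
  then obtain fs where fs: "\<And>k. fs k \<in> Cb" "\<And>k x. 0 \<le> fs k x"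
    and lim: "(\<lambda>k. cap \<P> p (\<lambda>x. g x - fs k x)) \<longlonglongrightarrow> 0"
    using g unfolding L1nonneg_def by blast
  have M: "mixture \<alpha> Q \<in> Mplus \<P> p"
    using \<P> p Q \<alpha> by (rule mixture_in_Mplus) (auto simp: norming intro: SUP_upper)
  have "(\<lambda>k. integral\<^sup>L (mixture \<alpha> Q) (fs k)) \<longlonglongrightarrow> 0"
    using ext_val_tendsto[OF \<P> p M g(1) fs(1) lim] ev0 by simp
  with Q \<alpha> fs have limQ: "(\<lambda>k. integral\<^sup>L (Q n) (fs k)) \<longlonglongrightarrow> 0" for n
    by (rule integral_tendsto_0_if_mixture)
  show ?thesis
  proof (rule antisym[OF ennreal_le_epsilon[where y=0]])
    fix e :: real assume e: "0 < e"
    define \<epsilon> where "\<epsilon> = e / 5"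
    have \<epsilon>: "0 < \<epsilon>" using e by (simp add: \<epsilon>_def)
    obtain K where K: "\<And>k. K \<le> k \<Longrightarrow> cap \<P> p (\<lambda>x. g x - fs k x) < ennreal \<epsilon>"
      using order_tendstoD(2)[OF lim, of "ennreal \<epsilon>"] \<epsilon> by (auto simp: eventually_sequentially)
    have close: "Lp_norm (Q n) p (\<lambda>x. fs m x - fs K x) \<le> 2 * \<epsilon>" if "K \<le> m" for n m
    proof -
      have diff: "(\<lambda>x. fs m x - fs K x) \<in> Cb" using fs(1) fs(1) by (rule Cb_diff)
      have "ennreal (Lp_norm (Q n) p (\<lambda>x. fs m x - fs K x)) \<le> cap \<P> p (\<lambda>x. fs m x - fs K x)"
        using norming[OF diff] cap_eq_cap_Cb[OF \<P> diff p0] by (auto intro: SUP_upper)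
      also have "\<dots> \<le> cap \<P> p (\<lambda>x. g x - fs m x) + cap \<P> p (\<lambda>x. g x - fs K x)"
        using \<P> p by (rule cap_diff_le)
      also have "\<dots> \<le> ennreal \<epsilon> + ennreal \<epsilon>" using K that by (intro add_mono less_imp_le) auto
      finally show ?thesis using \<epsilon> by (simp add: ennreal_plus[symmetric] ennreal_le_iff del: ennreal_plus)
    qed
    have "Lp_norm (Q n) p (fs K) \<le> 2 * (2 * \<epsilon>)" for n
      using Q by (intro Lp_norm_le_if_integral_tendsto_0[OF _ p fs limQ close]) auto
    then have "(SUP n. ennreal (Lp_norm (Q n) p (fs K))) \<le> ennreal (2 * (2 * \<epsilon>))"
      by (intro SUP_least ennreal_leI)
    moreover have "cap \<P> p (fs K) = (SUP n. ennreal (Lp_norm (Q n) p (fs K)))"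
      using norming[OF fs(1)] cap_eq_cap_Cb[OF \<P> fs(1) p0] by simp
    ultimately have "cap \<P> p (fs K) \<le> ennreal (4 * \<epsilon>)" by simp
    have "cap \<P> p g = cap \<P> p (\<lambda>x. (g x - fs K x) + fs K x)" by simp
    also have "\<dots> \<le> cap \<P> p (\<lambda>x. g x - fs K x) + cap \<P> p (fs K)" using \<P> p by (rule cap_add_le)
    also have "\<dots> \<le> ennreal \<epsilon> + ennreal (4 * \<epsilon>)"
      using K[OF order_refl] \<open>cap \<P> p (fs K) \<le> ennreal (4 * \<epsilon>)\<close> by (intro add_mono) auto
    also have "\<dots> = 0 + ennreal e"
      using \<epsilon> by (simp add: \<epsilon>_def ennreal_plus[symmetric] del: ennreal_plus)
    finally show "cap \<P> p g \<le> 0 + ennreal e" .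
  qed simp
qed

lemma mixture_in_canon_class:
  fixes \<P> :: "'a::metric_space measure set"
  assumes \<P>: "\<forall>P\<in>\<P>. borel_prob P" and p: "1 \<le> p" and Q: "\<forall>n. borel_prob (Q n)"
    and \<alpha>: "\<forall>n. 0 < \<alpha> n" "\<alpha> sums 1"
    and norming: "\<And>\<phi>. \<phi> \<in> Cb \<Longrightarrow> cap_Cb \<P> p \<phi> = (SUP n. ennreal (Lp_norm (Q n) p \<phi>))"
  shows "mixture \<alpha> Q \<in> canon_class \<P> p"
proof -
  have "mixture \<alpha> Q \<in> Mplus \<P> p"
    using \<P> p Q \<alpha> by (rule mixture_in_Mplus) (auto simp: norming intro: SUP_upper)
  then show ?thesis
    unfolding canon_class_def
    using ext_val_eq_0_if_cap_eq_0[OF \<P> p] cap_eq_0_if_mixture_ext_val_eq_0[OF assms] by blast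
qed

section \<open>Existence of a norming sequence\<close>

text \<open>Continuous cut-offs increasing to the indicator of an open set \<open>V\<close>; the case \<open>V = UNIV\<close>
  is separate because \<open>infdist x {} = 0\<close>.\<close>
definition open_cutoff :: "'a::metric_space set \<Rightarrow> nat \<Rightarrow> 'a \<Rightarrow> real" where
  "open_cutoff V k x = (if V = UNIV then 1 else min 1 (real k * infdist x (- V)))"

lemma abs_open_cutoff_le: "\<bar>open_cutoff V k x\<bar> \<le> 1"
  unfolding open_cutoff_def by (auto simp: infdist_nonneg)

lemma open_cutoff_Cb: "open_cutoff V k \<in> Cb"
  by (rule CbI[OF _ abs_open_cutoff_le])
    (cases "V = UNIV"; auto simp: open_cutoff_def intro!: continuous_intros)

lemma open_cutoff_tendsto_indicator:
  assumes "open V"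
  shows "(\<lambda>k. open_cutoff V k x) \<longlonglongrightarrow> indicator V x"
proof (cases "V = UNIV \<or> x \<notin> V")
  case True
  then show ?thesis by (cases "V = UNIV") (auto simp: open_cutoff_def)
next
  case False
  then have V: "V \<noteq> UNIV" and x: "x \<in> V" by auto
  have d: "0 < infdist x (- V)"
    using assms V x by (intro infdist_pos_not_in_closed) auto
  obtain N :: nat where N: "1 / infdist x (- V) < N" using reals_Archimedean2 by blast
  have "\<forall>\<^sub>F k in sequentially. open_cutoff V k x = 1"
  proof (rule eventually_sequentiallyI[of N])
    fix k assume "N \<le> k"
    then have "1 / infdist x (- V) < real k" using N by linarith
    then show "open_cutoff V k x = 1" using V d by (simp add: open_cutoff_def field_simps)
  qed
  then show ?thesis using x by (simp add: tendsto_eventually)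
qed

lemma integral_open_cutoff_tendsto:
  assumes P: "borel_prob P" and V: "open V"
  shows "(\<lambda>k. integral\<^sup>L P (open_cutoff V k)) \<longlonglongrightarrow> measure P V"
proof -
  interpret prob_space P using P by (simp add: borel_prob_def)
  have sP: "sets P = sets borel" using P by (simp add: borel_prob_def)
  have "(\<lambda>k. integral\<^sup>L P (open_cutoff V k)) \<longlonglongrightarrow> integral\<^sup>L P (indicator V :: 'a \<Rightarrow> real)"
  proof (rule integral_dominated_convergence[where w="\<lambda>x. 1"])
    show "open_cutoff V k \<in> borel_measurable P" for k
      using Cb_measurable[OF open_cutoff_Cb sP] .
    have "V \<in> sets P" using V sP by simp
    then show "(indicator V :: 'a \<Rightarrow> real) \<in> borel_measurable P" by simp
    show "AE x in P. (\<lambda>k. open_cutoff V k x) \<longlonglongrightarrow> indicator V x"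
      using open_cutoff_tendsto_indicator[OF V] by simp
    show "AE x in P. norm (open_cutoff V k x) \<le> 1" for k
      by (intro AE_I2) (simp add: abs_open_cutoff_le)
  qed simp
  then show ?thesis using space_borel_prob[OF P] V sP by simp
qed

lemma borel_prob_eqI_open:
  assumes P: "borel_prob P" and R: "borel_prob R" and eq: "\<And>U. open U \<Longrightarrow> measure P U = measure R U"
  shows "P = R"
proof (rule measure_eqI_generator_eq[where E="{U. open U}" and \<Omega>=UNIV and A="\<lambda>_. UNIV"])
  interpret P: prob_space P using P by (simp add: borel_prob_def)
  interpret R: prob_space R using R by (simp add: borel_prob_def)
  show "sets P = sigma_sets UNIV {U. open U}" "sets R = sigma_sets UNIV {U. open U}"
    using P R sets_borel by (simp_all add: borel_prob_def)
  show "emeasure P UNIV \<noteq> \<infinity>" using P.emeasure_space_1 space_borel_prob[OF P] by simp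
  fix X :: "'a set" assume "X \<in> {U. open U}"
  then show "emeasure P X = emeasure R X"
    using eq P R by (simp add: P.emeasure_eq_measure R.emeasure_eq_measure)
qed (auto simp: Int_stable_def)

text \<open>The integrals give the measures of finite unions of basis sets, and every open set is an
  increasing union of those.\<close>
lemma borel_prob_eqI_open_cutoff:
  fixes B :: "'a::metric_space set set"
  assumes B: "topological_basis B" "countable B" and P: "borel_prob P" and R: "borel_prob R"
    and eq: "\<And>F k. finite F \<Longrightarrow> F \<subseteq> B \<Longrightarrow>
      integral\<^sup>L P (open_cutoff (\<Union>F) k) = integral\<^sup>L R (open_cutoff (\<Union>F) k)"
  shows "P = R"
proof (rule borel_prob_eqI_open[OF P R])
  interpret P: prob_space P using P by (simp add: borel_prob_def)
  interpret R: prob_space R using R by (simp add: borel_prob_def)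
  have fin: "measure P (\<Union>F) = measure R (\<Union>F)" if "finite F" "F \<subseteq> B" for F
  proof -
    have "open (\<Union>F)" using that topological_basis_open[OF B(1)] by auto
    have "(\<lambda>k. integral\<^sup>L R (open_cutoff (\<Union>F) k)) \<longlonglongrightarrow> measure P (\<Union>F)"
      using integral_open_cutoff_tendsto[OF P \<open>open (\<Union>F)\<close>] unfolding eq[OF that] .
    then show ?thesis
      using integral_open_cutoff_tendsto[OF R \<open>open (\<Union>F)\<close>] by (rule LIMSEQ_unique)
  qed
  fix U :: "'a set" assume "open U"
  then obtain C where C: "C \<subseteq> B" "\<Union>C = U" using B(1) unfolding topological_basis_def by blast
  show "measure P U = measure R U"
  proof (cases "C = {}")
    case False
    have countable: "countable C" using countable_subset[OF C(1) B(2)] .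
    define c where "c = from_nat_into C"
    have c: "c m \<in> C" for m unfolding c_def using False by (rule from_nat_into)
    define V where "V n = \<Union>(c ` {..n})" for n
    have VB: "finite (c ` {..n})" "c ` {..n} \<subseteq> B" for n using c C(1) by auto
    have "open (V n)" for n
      unfolding V_def using VB(2) topological_basis_open[OF B(1)] by (intro open_Union) blast
    then have sets: "range V \<subseteq> sets P" "range V \<subseteq> sets R" using P R by (auto simp: borel_prob_def)
    have inc: "incseq V" unfolding V_def incseq_def by (intro allI impI Union_mono image_mono) auto
    have un: "(\<Union>n. V n) = U"
    proof
      show "(\<Union>n. V n) \<subseteq> U" unfolding V_def C(2)[symmetric] using c by blast
      show "U \<subseteq> (\<Union>n. V n)"
      proof
        fix x assume "x \<in> U"
        then obtain X where X: "X \<in> C" "x \<in> X" using C(2) by blast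
        then obtain m where "c m = X" unfolding c_def using from_nat_into_surj[OF countable] by blast
        then show "x \<in> (\<Union>n. V n)" unfolding V_def using X by blast
      qed
    qed
    have "(\<lambda>n. measure P (V n)) \<longlonglongrightarrow> measure P U"
      using P.finite_Lim_measure_incseq[OF sets(1) inc] un by simp
    then have "(\<lambda>n. measure R (V n)) \<longlonglongrightarrow> measure P U"
      unfolding V_def using fin[OF VB] by simp
    moreover have "(\<lambda>n. measure R (V n)) \<longlonglongrightarrow> measure R U"
      using R.finite_Lim_measure_incseq[OF sets(2) inc] un by simp
    ultimately show ?thesis by (rule LIMSEQ_unique)
  qed (use C in auto)
qed

definition measure_determining :: "(nat \<Rightarrow> 'a::topological_space \<Rightarrow> real) \<Rightarrow> bool" where
  "measure_determining t \<longleftrightarrow> (\<forall>j. t j \<in> Cb) \<and> (\<forall>P R. borel_prob P \<longrightarrow> borel_prob R \<longrightarrow>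
     (\<forall>j. integral\<^sup>L P (t j) = integral\<^sup>L R (t j)) \<longrightarrow> P = R)"

lemma ex_measure_determining:
  "\<exists>t :: nat \<Rightarrow> 'a::{metric_space, second_countable_topology} \<Rightarrow> real. measure_determining t"
proof -
  obtain B :: "'a set set" where B: "countable B" "topological_basis B" using ex_countable_basis by blast
  define T where "T = (\<lambda>(F, k). open_cutoff (\<Union>F) k) ` ({F. finite F \<and> F \<subseteq> B} \<times> (UNIV :: nat set))"
  have "countable T" unfolding T_def using countable_Collect_finite_subset[OF B(1)] by auto
  moreover have "T \<noteq> {}" unfolding T_def by auto
  ultimately have range: "range (from_nat_into T) = T" by simp
  have "T \<subseteq> Cb" unfolding T_def using open_cutoff_Cb by auto
  have "measure_determining (from_nat_into T)"
    unfolding measure_determining_def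
  proof (intro conjI allI impI)
    show "from_nat_into T j \<in> Cb" for j using range \<open>T \<subseteq> Cb\<close> by auto
    fix P R :: "'a measure"
    assume PR: "borel_prob P" "borel_prob R" and eq: "\<forall>j. integral\<^sup>L P (from_nat_into T j) = integral\<^sup>L R (from_nat_into T j)"
    show "P = R"
    proof (rule borel_prob_eqI_open_cutoff[OF B(2,1) PR])
      fix F k assume "finite F" "F \<subseteq> B"
      then have "open_cutoff (\<Union>F) k \<in> T" unfolding T_def by auto
      then obtain j where "open_cutoff (\<Union>F) k = from_nat_into T j" by (metis range rangeE)
      then show "integral\<^sup>L P (open_cutoff (\<Union>F) k) = integral\<^sup>L R (open_cutoff (\<Union>F) k)"
        using eq by simp
    qed
  qed
  then show ?thesis by blast
qed

lemma Lp_norm_tendsto_if_weak_conv: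
  assumes "weak_conv_meas Ps P" "\<phi> \<in> Cb" "0 < p"
  shows "(\<lambda>n. Lp_norm (Ps n) p \<phi>) \<longlonglongrightarrow> Lp_norm P p \<phi>"
  using assms Cb_abs_powr[OF assms(2,3)] unfolding Lp_norm_def weak_conv_meas_def
  by (intro tendsto_powr' tendsto_intros) (auto intro: integral_abs_powr_nonneg)

text \<open>By relative compactness some subsequence converges weakly, and its limit has the
  same determining integrals as \<open>P\<close>.\<close>
lemma weak_conv_subseq_if_determining_integrals_converge:
  assumes \<P>: "weakly_rel_compact \<P>" and Rs: "\<And>n. Rs n \<in> \<P>" and P: "borel_prob P"
    and t: "measure_determining t"
    and lim: "\<And>j. (\<lambda>n. integral\<^sup>L (Rs n) (t j)) \<longlonglongrightarrow> integral\<^sup>L P (t j)"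
  obtains r where "strict_mono r" "weak_conv_meas (Rs \<circ> r) P"
proof -
  obtain r P' where r: "strict_mono r" "borel_prob P'" "weak_conv_meas (Rs \<circ> r) P'"
    using \<P> Rs unfolding weakly_rel_compact_def by blast
  have "integral\<^sup>L P' (t j) = integral\<^sup>L P (t j)" for j
  proof (rule LIMSEQ_unique)
    show "(\<lambda>n. integral\<^sup>L (Rs (r n)) (t j)) \<longlonglongrightarrow> integral\<^sup>L P' (t j)"
      using r(3) t unfolding weak_conv_meas_def measure_determining_def by simp
    show "(\<lambda>n. integral\<^sup>L (Rs (r n)) (t j)) \<longlonglongrightarrow> integral\<^sup>L P (t j)"
      using LIMSEQ_subseq_LIMSEQ[OF lim r(1)] by (simp add: o_def)
  qed
  then have "P' = P" using t r(2) P unfolding measure_determining_def by blast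
  then show ?thesis using r that by blast
qed

lemma countable_norming_family:
  fixes \<P> :: "'a::polish_space measure set"
  assumes \<P>: "\<forall>P\<in>\<P>. borel_prob P" "weakly_rel_compact \<P>" "\<P> \<noteq> {}" and p: "0 < p"
  obtains Q :: "nat \<Rightarrow> 'a measure"
  where "\<forall>n. Q n \<in> \<P>" "\<And>\<phi>. \<phi> \<in> Cb \<Longrightarrow> cap_Cb \<P> p \<phi> = (SUP n. ennreal (Lp_norm (Q n) p \<phi>))"
proof -
  obtain t :: "nat \<Rightarrow> 'a \<Rightarrow> real" where t: "measure_determining t"
    using ex_measure_determining by blast
  define \<Phi> where "\<Phi> P = (\<lambda>j. integral\<^sup>L P (t j))" for P :: "'a measure"
  obtain D' where D': "countable D'" "D' \<subseteq> \<Phi> ` \<P>" "\<Phi> ` \<P> \<subseteq> closure D'" by (rule separable)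
  define sel where "sel d = (SOME P. P \<in> \<P> \<and> \<Phi> P = d)" for d
  have sel: "sel d \<in> \<P>" "\<Phi> (sel d) = d" if "d \<in> D'" for d
    using someI_ex[of "\<lambda>P. P \<in> \<P> \<and> \<Phi> P = d"] that D'(2) unfolding sel_def by blast+
  have approx: "ennreal (Lp_norm P p \<phi>) \<le> (SUP R\<in>sel ` D'. ennreal (Lp_norm R p \<phi>))"
    if P: "P \<in> \<P>" and \<phi>: "\<phi> \<in> Cb" for P \<phi>
  proof -
    have "\<Phi> P \<in> closure D'" using D'(3) P by blast
    then obtain x where x: "\<And>n. x n \<in> D'" "x \<longlonglongrightarrow> \<Phi> P"
      by (meson closure_sequential)
    have lim: "(\<lambda>n. integral\<^sup>L (sel (x n)) (t j)) \<longlonglongrightarrow> integral\<^sup>L P (t j)" for j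
    proof -
      have "x n j = integral\<^sup>L (sel (x n)) (t j)" for n
        using fun_cong[OF sel(2)[OF x(1)[of n]], of j] unfolding \<Phi>_def by simp
      moreover have "(\<lambda>n. x n j) \<longlonglongrightarrow> \<Phi> P j"
        using continuous_on_tendsto_compose[OF continuous_on_product_coordinates[of j] x(2)] by simp
      ultimately show ?thesis unfolding \<Phi>_def by simp
    qed
    have "sel (x n) \<in> \<P>" for n using sel(1) x(1) by blast
    moreover have "borel_prob P" using \<P>(1) P by blast
    ultimately obtain r where "strict_mono r" "weak_conv_meas ((\<lambda>n. sel (x n)) \<circ> r) P"
      using weak_conv_subseq_if_determining_integrals_converge[OF \<P>(2) _ _ t lim] by blast
    then have "(\<lambda>n. ennreal (Lp_norm (sel (x (r n))) p \<phi>)) \<longlonglongrightarrow> ennreal (Lp_norm P p \<phi>)"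
      using Lp_norm_tendsto_if_weak_conv[OF _ \<phi> p] by (auto intro: tendsto_ennrealI simp: o_def)
    then show ?thesis
      by (rule LIMSEQ_le_const2) (intro exI[of _ 0] allI impI SUP_upper imageI x(1))
  qed
  define S where "S = sel ` D'"
  have "S \<subseteq> \<P>" unfolding S_def using sel(1) by blast
  have "D' \<noteq> {}" using \<P>(3) D'(3) by auto
  then have "S \<noteq> {}" "countable S" unfolding S_def using D'(1) by auto
  then have range: "range (from_nat_into S) = S" by (rule range_from_nat_into)
  show ?thesis
  proof (rule that)
    show "\<forall>n. from_nat_into S n \<in> \<P>" using range \<open>S \<subseteq> \<P>\<close> by blast
    fix \<phi> :: "'a \<Rightarrow> real" assume \<phi>: "\<phi> \<in> Cb"
    have "(SUP P\<in>\<P>. ennreal (Lp_norm P p \<phi>)) \<le> (SUP R\<in>S. ennreal (Lp_norm R p \<phi>))"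
      unfolding S_def using approx[OF _ \<phi>] by (rule SUP_least)
    moreover have "(SUP R\<in>S. ennreal (Lp_norm R p \<phi>)) \<le> (SUP P\<in>\<P>. ennreal (Lp_norm P p \<phi>))"
      using \<open>S \<subseteq> \<P>\<close> by (rule SUP_subset_mono) simp
    ultimately have "cap_Cb \<P> p \<phi> = (SUP R\<in>range (from_nat_into S). ennreal (Lp_norm R p \<phi>))"
      unfolding cap_Cb_eq_SUP_Lp_norm range by (rule antisym)
    then show "cap_Cb \<P> p \<phi> = (SUP n. ennreal (Lp_norm (from_nat_into S n) p \<phi>))"
      by (simp add: image_image)
  qed
qed

lemma null_measure_in_canon_class:
  assumes "1 \<le> p"
  shows "null_measure borel \<in> canon_class ({} :: 'a::metric_space measure set) p"
proof -
  have cap0: "cap {} p g = 0" for g :: "'a \<Rightarrow> real"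
  proof -
    have "lsc (\<lambda>x::'a. \<infinity>)" by (simp add: lsc_def)
    then have "cap {} p g \<le> cap_lsc {} p (\<lambda>x::'a. \<infinity>)" by (rule cap_le_cap_lsc) simp
    also have "\<dots> \<le> 0" unfolding cap_lsc_def cap_Cb_def by (intro SUP_least) simp
    finally show ?thesis by simp
  qed
  have "null_measure (borel :: 'a measure) \<in> Mplus {} p"
    unfolding Mplus_def borel_finite_def by (auto intro: finite_measureI)
  then show ?thesis
    unfolding canon_class_def using ext_val_eq_0_if_cap_eq_0[OF _ assms] cap0 by auto
qed

lemma canon_class_nonempty:
  fixes \<P> :: "'a::polish_space measure set"
  assumes "\<forall>P\<in>\<P>. borel_prob P" "weakly_rel_compact \<P>" "1 \<le> p"
  shows "canon_class \<P> p \<noteq> {}"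
proof (cases "\<P> = {}")
  case False
  have "0 < p" using assms(3) by simp
  then obtain Q :: "nat \<Rightarrow> 'a measure" where Q: "\<forall>n. Q n \<in> \<P>"
    "\<And>\<phi>. \<phi> \<in> Cb \<Longrightarrow> cap_Cb \<P> p \<phi> = (SUP n. ennreal (Lp_norm (Q n) p \<phi>))"
    using countable_norming_family[OF assms(1,2) False] by blast
  have "mixture (\<lambda>n. (1/2) ^ Suc n) Q \<in> canon_class \<P> p"
    using assms(1,3) Q(1) power_half_series by (intro mixture_in_canon_class Q(2)) auto
  then show ?thesis by blast
qed (use null_measure_in_canon_class[OF assms(3)] in blast)

lemma Collect_conj_eq_iff:
  "{x\<in>A. P x \<and> Q x} = {x\<in>A. P x \<and> R x} \<longleftrightarrow> (\<forall>x\<in>A. P x \<longrightarrow> (Q x \<longleftrightarrow> R x))"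
  by blast

lemma canon_class_iff_zero_set:
  "\<nu> \<in> canon_class \<P> p \<longleftrightarrow> \<nu> \<in> Mplus \<P> p \<and>
    {g\<in>L1cap \<P> p. L1nonneg \<P> p g \<and> ext_val \<P> p \<nu> g = 0} = {g\<in>L1cap \<P> p. L1nonneg \<P> p g \<and> cap \<P> p g = 0}"
  unfolding canon_class_def Collect_conj_eq_iff by (simp only: mem_Collect_eq)

lemma canon_class_eq_Rcap_class:
  assumes "\<mu> \<in> canon_class \<P> p"
  shows "canon_class \<P> p = {\<nu>\<in>Mplus \<P> p. Rcap \<P> p \<mu> \<nu>}"
proof (rule set_eqI)
  fix \<nu>
  have "{g\<in>L1cap \<P> p. L1nonneg \<P> p g \<and> ext_val \<P> p \<mu> g = 0} = {g\<in>L1cap \<P> p. L1nonneg \<P> p g \<and> cap \<P> p g = 0}"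
    using assms unfolding canon_class_iff_zero_set by (rule conjunct2)
  then show "\<nu> \<in> canon_class \<P> p \<longleftrightarrow> \<nu> \<in> {\<nu>\<in>Mplus \<P> p. Rcap \<P> p \<mu> \<nu>}"
    unfolding canon_class_iff_zero_set Rcap_def mem_Collect_eq by (simp only: eq_commute)
qed
lemma Cb_in_L1cap:
  fixes \<P> :: "'a::metric_space measure set"
  assumes "\<forall>P\<in>\<P>. borel_prob P" "0 < p" "\<phi> \<in> Cb"
  shows "\<phi> \<in> L1cap \<P> p"
  using cap_eq_cap_Cb[OF assms(1,3,2)] cap_Cb_finite[OF assms(1,3,2)] assms(3)
  unfolding L1cap_def by (auto intro!: bexI[of _ \<phi>])

lemma epowr_nn_integral_eq_Lp_norm:
  assumes "borel_prob Q" "0 < p" "\<phi> \<in> Cb"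
  shows "epowr (\<integral>\<^sup>+x. ennreal (\<bar>\<phi> x\<bar> powr p) \<partial>Q) (1 / p) = ennreal (Lp_norm Q p \<phi>)"
  using nn_integral_Cb[OF borel_prob_imp_borel_finite[OF assms(1)] Cb_abs_powr[OF assms(3,2)]]
    integral_abs_powr_nonneg[where f=\<phi> and p=p and P=Q]
  by (simp add: epowr_def Lp_norm_def)

theorem theorem4p11:
  fixes \<P> :: "'a::polish_space measure set" and p :: real
  assumes "\<forall>P\<in>\<P>. borel_prob P"
    and "weakly_rel_compact \<P>"
    and "1 \<le> p"
  shows "canon_class \<P> p \<noteq> {}
    \<and> (\<exists>\<mu>\<in>Mplus \<P> p. canon_class \<P> p = {\<nu>\<in>Mplus \<P> p. Rcap \<P> p \<mu> \<nu>})
    \<and> (\<forall>(Q::nat \<Rightarrow> 'a measure) (\<alpha>::nat \<Rightarrow> real).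
          (\<forall>n. borel_prob (Q n))
        \<longrightarrow> (\<forall>g\<in>L1cap \<P> p. cap \<P> p g =
               (SUP n. epowr (\<integral>\<^sup>+x. ennreal (\<bar>g x\<bar> powr p) \<partial>Q n) (1 / p)))
        \<longrightarrow> (\<forall>n. 0 < \<alpha> n) \<longrightarrow> \<alpha> sums 1
        \<longrightarrow> mixture \<alpha> Q \<in> canon_class \<P> p)"
proof -
  note \<P> = assms(1) and p = assms(3)
  have p0: "0 < p" using p by simp
  obtain \<mu> where \<mu>: "\<mu> \<in> canon_class \<P> p" using canon_class_nonempty[OF assms] by blast
  have "mixture \<alpha> Q \<in> canon_class \<P> p"
    if Q: "\<forall>n. borel_prob (Q n)" and \<alpha>: "\<forall>n. 0 < \<alpha> n" "\<alpha> sums 1"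
      and cap_eq: "\<forall>g\<in>L1cap \<P> p. cap \<P> p g = (SUP n. epowr (\<integral>\<^sup>+x. ennreal (\<bar>g x\<bar> powr p) \<partial>Q n) (1 / p))"
    for Q :: "nat \<Rightarrow> 'a measure" and \<alpha>
  proof (rule mixture_in_canon_class[OF \<P> p Q \<alpha>])
    fix \<phi> :: "'a \<Rightarrow> real" assume \<phi>: "\<phi> \<in> Cb"
    then show "cap_Cb \<P> p \<phi> = (SUP n. ennreal (Lp_norm (Q n) p \<phi>))"
      using cap_eq Cb_in_L1cap[OF \<P> p0 \<phi>] cap_eq_cap_Cb[OF \<P> \<phi> p0]
        epowr_nn_integral_eq_Lp_norm[OF _ p0 \<phi>] Q by simp
  qed
  moreover have "\<mu> \<in> Mplus \<P> p" using \<mu> by (simp add: canon_class_def)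
  ultimately show ?thesis using \<mu> canon_class_eq_Rcap_class[OF \<mu>] by blast
qed

end
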